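(* Let $(E,\phi)$ be a $t$-module of dimension $d$ over $K$ with a fixed coordinate system. Assume there exists $a\in\mathbb{F}_q[t]\setminus\mathbb{F}_q$ such that, with $s:=\deg_\tau(\phi_a)$ and $D_a\in\mathrm{Mat}_{d\times d}(K\{\tau\})$ the matrix representing $\phi_a$, the matrix $\sigma^sD_a\in\mathrm{Mat}_{d\times d}(K\{\sigma\})$ has full rank $d$ modulo $\sigma^s$. Then $E$ is abelian and $E$ is $t$-finite.
   Context: $\mathbb{F}_q$ finite field, $K$ perfect field containing $\mathbb{F}_q$, $\ell:\mathbb{F}_q[t]\to K$ an $\mathbb{F}_q$-algebra homomorphism. $K\{\tau\}$ is the skew polynomial ring with $\tau\alpha=\alpha^q\tau$ ($\alpha\in K$), identified with $\mathbb{F}_q$-linear endomorphisms of $\mathbb{G}_a$ over $K$. $K(\!(\sigma)\!)$ is the skew Laurent series field with $\sigma\alpha=\alpha^{1/q}\sigma$, valuation = order in $\sigma$, valuation ring $K[\![\sigma]\!]$; $K\{\sigma\}$ is its subring of skew polynomials in $\sigma$; $K\{\tau\}\subseteq K(\!(\sigma)\!)$ via $\tau\mapsto\sigma^{-1}$ (so $\sigma^sD_a$ has entries in $K\{\sigma\}$). A $t$-module $(E,\phi)$ of dimension $d$: $\mathbb{F}_q$-vector space scheme $E\cong\mathbb{G}_a^d$ over $K$ with $\mathbb{F}_q$-algebra homomorphism $\phi:\mathbb{F}_q[t]\to\mathrm{End}_{\mathrm{grp},\mathbb{F}_q}(E)$, $d\phi_a-\ell(a)$ nilpotent on $\mathrm{Lie}(E)$.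 With a fixed coordinate system $E\cong\mathbb{G}_a^d$, $\phi_a$ is represented by a matrix in $\mathrm{Mat}_{d\times d}(K\{\tau\})$, and $\deg_\tau(\phi_a)$ is the maximal $\tau$-degree of its entries. $E$ is abelian if $\mathrm{Hom}_{\mathrm{grp},\mathbb{F}_q}(E,\mathbb{G}_a)$ ($K$ acting by post-composition, $t$ by pre-composition with $\phi_t$) is a finitely generated $K[t]$-module; $E$ is $t$-finite if $\mathrm{Hom}_{\mathrm{grp},\mathbb{F}_q}(\mathbb{G}_a,E)$ ($K$ acting by pre-composition with scalars, $t$ by post-composition with $\phi_t$) is a finitely generated $K[t]$-module. Rank modulo $\sigma^s$: a matrix $B$ over $K[\![\sigma]\!]$ can be diagonalized by elementary row and column operations over $K[\![\sigma]\!]$ with non-zero diagonal entries $\sigma^{\nu_1},\dots,\sigma^{\nu_n}$; $B$ has rank $r$ modulo $\sigma^s$ if $\#\{i:\nu_i<s\}=r$. *)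

theory Defs
  imports "HOL-Computational_Algebra.Polynomial"
begin

text \<open>F is a subfield of K (the copy of F_q inside K); q = card F.\<close>
definition subfield_set :: "'k::field set \<Rightarrow> bool" where
  "subfield_set F \<longleftrightarrow> 0 \<in> F \<and> 1 \<in> F \<and>
     (\<forall>x\<in>F. \<forall>y\<in>F. x + y \<in> F \<and> x * y \<in> F) \<and> (\<forall>x\<in>F. - x \<in> F \<and> inverse x \<in> F)"

definition perfect_field :: "'k::field itself \<Rightarrow> bool" where
  "perfect_field _ \<longleftrightarrow> CHAR('k) = 0 \<or> (\<forall>y::'k. \<exists>x. x ^ CHAR('k) = y)"

text \<open>Inverse of the q-Frobenius x |-> x^q (well defined on a perfect field of char p).\<close>
definition frob_root :: "nat \<Rightarrow> 'k::field \<Rightarrow> 'k" where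
  "frob_root q x = (THE y. y ^ q = x)"

text \<open>An element sum_i a_i tau^i of K{tau} is stored as the 'k poly with coefficients a_i
  (coefficients on the left); multiplication uses tau a = a^q tau.\<close>
definition tau_mult :: "nat \<Rightarrow> 'k::field poly \<Rightarrow> 'k poly \<Rightarrow> 'k poly" where
  "tau_mult q f g = (\<Sum>i\<le>degree f. \<Sum>j\<le>degree g. monom (coeff f i * coeff g j ^ (q ^ i)) (i + j))"

text \<open>d x d matrices over K{tau}, indexed by a finite type 'n with d = CARD('n).\<close>
definition tmat_mult :: "nat \<Rightarrow> ('n::finite \<Rightarrow> 'n \<Rightarrow> 'k::field poly) \<Rightarrow> ('n \<Rightarrow> 'n \<Rightarrow> 'k poly) \<Rightarrow> ('n \<Rightarrow> 'n \<Rightarrow> 'k poly)" where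
  "tmat_mult q A B = (\<lambda>i j. \<Sum>k\<in>UNIV. tau_mult q (A i k) (B k j))"

definition tmat_one :: "'n::finite \<Rightarrow> 'n \<Rightarrow> 'k::field poly" where
  "tmat_one = (\<lambda>i j. if i = j then 1 else 0)"

definition tmat_pow :: "nat \<Rightarrow> ('n::finite \<Rightarrow> 'n \<Rightarrow> 'k::field poly) \<Rightarrow> nat \<Rightarrow> ('n \<Rightarrow> 'n \<Rightarrow> 'k poly)" where
  "tmat_pow q A n = (tmat_mult q A ^^ n) tmat_one"

text \<open>phi_a = a(phi_t) for a in F_q[t], where D = phi_t; the F_q-coefficients act as scalars.\<close>
definition phi_eval :: "nat \<Rightarrow> ('n::finite \<Rightarrow> 'n \<Rightarrow> 'k::field poly) \<Rightarrow> 'k poly \<Rightarrow> ('n \<Rightarrow> 'n \<Rightarrow> 'k poly)" where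
  "phi_eval q D a = (\<lambda>i j. \<Sum>k\<le>degree a. smult (coeff a k) (tmat_pow q D k i j))"

definition tau_deg :: "('n::finite \<Rightarrow> 'n \<Rightarrow> 'k::field poly) \<Rightarrow> nat" where
  "tau_deg A = Max {degree (A i j) | i j. True}"

text \<open>Differential (action on Lie(E)): the tau^0 coefficient matrix.\<close>
definition dmat :: "('n::finite \<Rightarrow> 'n \<Rightarrow> 'k::field poly) \<Rightarrow> ('n \<Rightarrow> 'n \<Rightarrow> 'k)" where
  "dmat A = (\<lambda>i j. coeff (A i j) 0)"

definition kmat_mult :: "('n::finite \<Rightarrow> 'n \<Rightarrow> 'k::field) \<Rightarrow> ('n \<Rightarrow> 'n \<Rightarrow> 'k) \<Rightarrow> ('n \<Rightarrow> 'n \<Rightarrow> 'k)" where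
  "kmat_mult A B = (\<lambda>i j. \<Sum>k\<in>UNIV. A i k * B k j)"

definition kmat_nilpotent :: "('n::finite \<Rightarrow> 'n \<Rightarrow> 'k::field) \<Rightarrow> bool" where
  "kmat_nilpotent M \<longleftrightarrow> (\<exists>N. (kmat_mult M ^^ N) (\<lambda>i j. if i = j then 1 else 0) = (\<lambda>i j. 0))"

text \<open>t-module structure with phi_t = D, where ell(a) = a(theta), theta = ell(t):
  d(phi_a) - ell(a) is nilpotent for every a in F_q[t].\<close>
definition is_t_module :: "'k::field set \<Rightarrow> 'k \<Rightarrow> ('n::finite \<Rightarrow> 'n \<Rightarrow> 'k poly) \<Rightarrow> bool" where
  "is_t_module F \<theta> D \<longleftrightarrow> (\<forall>a. set (coeffs a) \<subseteq> F \<longrightarrow>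
     kmat_nilpotent (\<lambda>i j. dmat (phi_eval (card F) D a) i j - (if i = j then poly a \<theta> else 0)))"

text \<open>Hom(E,G_a) = row vectors over K{tau}; c in K acts by post-composition (left
  multiplication), t by pre-composition with phi_t (right multiplication by D).\<close>
definition row_act :: "nat \<Rightarrow> ('n::finite \<Rightarrow> 'n \<Rightarrow> 'k::field poly) \<Rightarrow> 'k poly \<Rightarrow> ('n \<Rightarrow> 'k poly) \<Rightarrow> ('n \<Rightarrow> 'k poly)" where
  "row_act q D p m = (\<lambda>j. \<Sum>k\<le>degree p.
      tau_mult q [:coeff p k:] (\<Sum>i\<in>UNIV. tau_mult q (m i) (tmat_pow q D k i j)))"

definition abelian :: "nat \<Rightarrow> ('n::finite \<Rightarrow> 'n \<Rightarrow> 'k::field poly) \<Rightarrow> bool" where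
  "abelian q D \<longleftrightarrow> (\<exists>S. finite S \<and>
     (\<forall>m. \<exists>c. \<forall>j. m j = (\<Sum>g\<in>S. row_act q D (c g) g j)))"

text \<open>Hom(G_a,E) = column vectors over K{tau}; c in K acts by pre-composition with the
  scalar c (right multiplication), t by post-composition with phi_t (left multiplication by D).\<close>
definition col_act :: "nat \<Rightarrow> ('n::finite \<Rightarrow> 'n \<Rightarrow> 'k::field poly) \<Rightarrow> 'k poly \<Rightarrow> ('n \<Rightarrow> 'k poly) \<Rightarrow> ('n \<Rightarrow> 'k poly)" where
  "col_act q D p v = (\<lambda>i. \<Sum>k\<le>degree p.
      tau_mult q (\<Sum>j\<in>UNIV. tau_mult q (tmat_pow q D k i j) (v j)) [:coeff p k:])"

definition t_finite :: "nat \<Rightarrow> ('n::finite \<Rightarrow> 'n \<Rightarrow> 'k::field poly) \<Rightarrow> bool" where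
  "t_finite q D \<longleftrightarrow> (\<exists>S. finite S \<and>
     (\<forall>v. \<exists>c. \<forall>i. v i = (\<Sum>g\<in>S. col_act q D (c g) g i)))"

text \<open>sum_n b_n sigma^n stored as n |-> b_n (left coefficients); sigma a = a^(1/q) sigma.\<close>
definition sig_mult :: "nat \<Rightarrow> (nat \<Rightarrow> 'k::field) \<Rightarrow> (nat \<Rightarrow> 'k) \<Rightarrow> (nat \<Rightarrow> 'k)" where
  "sig_mult q a b = (\<lambda>n. \<Sum>i\<le>n. a i * (frob_root q ^^ i) (b (n - i)))"

definition sig_one :: "nat \<Rightarrow> 'k::field" where
  "sig_one = (\<lambda>n. if n = 0 then 1 else 0)"

definition sig_unit :: "nat \<Rightarrow> (nat \<Rightarrow> 'k::field) \<Rightarrow> bool" where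
  "sig_unit q u \<longleftrightarrow> (\<exists>v. sig_mult q u v = sig_one \<and> sig_mult q v u = sig_one)"

definition sig_pow :: "nat \<Rightarrow> nat \<Rightarrow> 'k::field" where
  "sig_pow \<nu> = (\<lambda>n. if n = \<nu> then 1 else 0)"

definition swap_idx :: "'n \<Rightarrow> 'n \<Rightarrow> 'n \<Rightarrow> 'n" where
  "swap_idx a b i = (if i = a then b else if i = b then a else i)"

inductive elem_ops :: "nat \<Rightarrow> ('n \<Rightarrow> 'n \<Rightarrow> nat \<Rightarrow> 'k::field) \<Rightarrow> ('n \<Rightarrow> 'n \<Rightarrow> nat \<Rightarrow> 'k) \<Rightarrow> bool"
  for q :: nat where
  refl: "elem_ops q B B"
| row_swap: "elem_ops q B C \<Longrightarrow> elem_ops q B (\<lambda>i j. C (swap_idx a b i) j)"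
| col_swap: "elem_ops q B C \<Longrightarrow> elem_ops q B (\<lambda>i j. C i (swap_idx a b j))"
| row_scale: "elem_ops q B C \<Longrightarrow> sig_unit q u \<Longrightarrow>
    elem_ops q B (\<lambda>i j. if i = a then sig_mult q u (C i j) else C i j)"
| col_scale: "elem_ops q B C \<Longrightarrow> sig_unit q u \<Longrightarrow>
    elem_ops q B (\<lambda>i j. if j = a then sig_mult q (C i j) u else C i j)"
| row_add: "elem_ops q B C \<Longrightarrow> a \<noteq> b \<Longrightarrow>
    elem_ops q B (\<lambda>i j. if i = a then (\<lambda>n. C a j n + sig_mult q c (C b j) n) else C i j)"
| col_add: "elem_ops q B C \<Longrightarrow> a \<noteq> b \<Longrightarrow>
    elem_ops q B (\<lambda>i j. if j = a then (\<lambda>n. C i a n + sig_mult q (C i b) c n) else C i j)"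

definition rank_mod :: "nat \<Rightarrow> ('n::finite \<Rightarrow> 'n \<Rightarrow> nat \<Rightarrow> 'k::field) \<Rightarrow> nat \<Rightarrow> nat \<Rightarrow> bool" where
  "rank_mod q B s r \<longleftrightarrow> (\<exists>B'. elem_ops q B B' \<and>
     (\<forall>i j. i \<noteq> j \<longrightarrow> B' i j = (\<lambda>_. 0)) \<and>
     (\<forall>i. B' i i = (\<lambda>_. 0) \<or> (\<exists>\<nu>. B' i i = sig_pow \<nu>)) \<and>
     card {i. \<exists>\<nu><s. B' i i = sig_pow \<nu>} = r)"

text \<open>sigma^s f for f = sum_i a_i tau^i (tau = sigma^-1): sum_i a_i^(q^-s) sigma^(s-i).\<close>
definition sigma_shift :: "nat \<Rightarrow> nat \<Rightarrow> 'k::field poly \<Rightarrow> (nat \<Rightarrow> 'k)" where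
  "sigma_shift q s f = (\<lambda>j. if j \<le> s then (frob_root q ^^ s) (coeff f (s - j)) else 0)"

end

theory Submission
  imports Defs
begin

text \<open>Let \<open>B = \<sigma>\<^sup>s D\<^sub>a\<close> over \<open>K[[\<sigma>]]\<close>. Full rank modulo \<open>\<sigma>\<^sup>s\<close> means that
  elementary operations turn \<open>B\<close> into a diagonal matrix with entries \<open>\<sigma>\<^sup>\<nu>\<close>, \<open>\<nu> < s\<close>;
  as these operations are invertible, both the row span and the column span of \<open>B\<close> contain
  \<open>\<sigma>\<^sup>s\<^sup>-\<^sup>1 K[[\<sigma>]]\<^sup>d\<close>. Read back in \<open>K{\<tau>}\<close> (where \<open>\<tau> = \<sigma>\<^sup>-\<^sup>1\<close>) this is a
  division with remainder: a row vector \<open>m\<close> of \<open>\<tau>\<close>-degree \<open>\<le> l\<close>, \<open>l \<ge> s\<close>, equals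
  \<open>Q D\<^sub>a + r\<close> with \<open>deg Q < l\<close> and \<open>deg r < s\<close>; one solves \<open>w B = \<sigma>\<^sup>N m\<close>
  for \<open>N = l - 1 + s\<close> and truncates \<open>w\<close> to a polynomial \<open>Q\<close>. Since right multiplication
  by \<open>D\<^sub>a = \<phi>\<^sub>a\<close> is the action of \<open>a \<in> F\<^sub>q[t]\<close>, induction on the degree shows that the
  finitely many monomial vectors of degree \<open>< s\<close> generate \<open>Hom(E, G\<^sub>a)\<close> over \<open>K[t]\<close>.
  Columns and \<open>Hom(G\<^sub>a, E)\<close> are symmetric, except that scalars now act on the right,
  which twists coefficients by powers of Frobenius.\<close>

lemma CHAR_pos_if_finite_range_of_nat:
  assumes "finite (range (of_nat :: nat \<Rightarrow> 'a::semiring_1_cancel))"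
  shows "CHAR('a) > 0"
proof (rule ccontr)
  assume "\<not> CHAR('a) > 0"
  have "m = n" if "(of_nat m :: 'a) = of_nat n" for m n
    using that \<open>\<not> CHAR('a) > 0\<close>
      of_nat_eq_iff_char_dvd[of m n, where 'a='a] of_nat_eq_iff_char_dvd[of n m, where 'a='a]
    by (cases m n rule: linorder_cases) auto
  hence "inj (of_nat :: nat \<Rightarrow> 'a)"
    by (rule injI)
  with assms show False
    using finite_imageD infinite_UNIV_nat by blast
qed

lemma smult_sum_right: "smult c (sum f A) = (\<Sum>a\<in>A. smult c (f a))"
  by (induction A rule: infinite_finite_induct) (simp_all add: smult_add_right)

lemma swap_idx_swap_idx [simp]: "swap_idx a b (swap_idx a b i) = i"
  unfolding swap_idx_def by auto

lemma sum_swap_idx: "(\<Sum>i\<in>UNIV. f (swap_idx a b i)) = (\<Sum>i\<in>(UNIV :: 'n::finite set). f i)"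
  by (rule sum.reindex_bij_witness[of _ "swap_idx a b" "swap_idx a b"]) auto

definition monom_vec :: "'n \<Rightarrow> 'a::zero \<Rightarrow> nat \<Rightarrow> 'n \<Rightarrow> 'a poly"
  where "monom_vec j c l = (\<lambda>i. if i = j then monom c l else 0)"

definition monom_vecs_below :: "nat \<Rightarrow> ('n \<Rightarrow> 'a::{zero, one} poly) set"
  where "monom_vecs_below s = {monom_vec j 1 l | j l. l < s}"

lemma finite_monom_vecs_below:
  "finite (monom_vecs_below s :: ('n::finite \<Rightarrow> 'a::{zero, one} poly) set)"
proof -
  have "(monom_vecs_below s :: ('n \<Rightarrow> 'a poly) set) = (\<lambda>(j, l). monom_vec j 1 l) ` (UNIV \<times> {..<s})"
    unfolding monom_vecs_below_def by auto
  thus ?thesis by simp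
qed

lemma vec_eq_sum_monom_vecs:
  assumes "\<And>j. degree (m j) \<le> n"
  shows "m = (\<lambda>j. \<Sum>j'\<in>(UNIV :: 'n::finite set). \<Sum>l\<le>n. monom_vec j' (coeff (m j') l) l j)"
proof (rule ext)
  fix j
  have "(\<Sum>j'\<in>UNIV. \<Sum>l\<le>n. monom_vec j' (coeff (m j') l) l j)
      = (\<Sum>j'\<in>UNIV. if j = j' then (\<Sum>l\<le>n. monom (coeff (m j') l) l) else 0)"
    unfolding monom_vec_def by (rule sum.cong) auto
  also have "\<dots> = m j"
    using poly_as_sum_of_monoms'[OF assms[of j]] by simp
  finally show "m j = (\<Sum>j'\<in>UNIV. \<Sum>l\<le>n. monom_vec j' (coeff (m j') l) l j)" ..
qed

lemma degree_le_tau_deg: "degree (A i j) \<le> tau_deg A"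
proof -
  have "{degree (A i j) | i j. True} = (\<lambda>(i, j). degree (A i j)) ` UNIV"
    by auto
  thus ?thesis
    unfolding tau_deg_def
    by (metis (mono_tags, lifting) Max_ge finite_UNIV finite_imageI rangeI case_prod_conv)
qed

section \<open>Finite subfields and the Frobenius\<close>

locale finite_subfield =
  fixes F :: "'k::field set"
  assumes subfield: "subfield_set F" and finite: "finite F"
begin

abbreviation q :: nat where "q \<equiv> card F"

lemma zero_mem: "0 \<in> F" and one_mem: "1 \<in> F"
  and add_mem: "x \<in> F \<Longrightarrow> y \<in> F \<Longrightarrow> x + y \<in> F"
  and mult_mem: "x \<in> F \<Longrightarrow> y \<in> F \<Longrightarrow> x * y \<in> F"
  and divide_mem: "x \<in> F \<Longrightarrow> y \<in> F \<Longrightarrow> x / y \<in> F"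
  using subfield unfolding subfield_set_def divide_inverse by auto

lemma of_nat_mem: "of_nat n \<in> F"
  by (induction n) (auto simp: zero_mem one_mem add_mem)

lemma prime_CHAR: "prime CHAR('k)"
proof -
  have "finite (range (of_nat :: nat \<Rightarrow> 'k))"
    using finite by (rule finite_subset[rotated]) (auto simp: of_nat_mem)
  thus ?thesis
    using CHAR_pos_if_finite_range_of_nat prime_CHAR_semidom by blast
qed

lemma card_ge_2: "q \<ge> 2"
proof -
  have "card {0, 1 :: 'k} \<le> q"
    using finite zero_mem one_mem by (intro card_mono) auto
  thus ?thesis by simp
qed

lemma power_card_eq_same: "x \<in> F \<Longrightarrow> x ^ q = x"
proof (cases "x = 0")
  case False
  assume x: "x \<in> F"
  have "x * (\<Prod>y\<in>F-{0}. x * y) = x * x ^ (q - 1) * \<Prod>(F-{0})"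
    using finite x zero_mem by (simp add: prod.distrib mult_ac card_Diff_singleton)
  also have "x * x ^ (q - 1) = x ^ q"
    using card_ge_2 by (simp flip: power_Suc)
  also have "(\<Prod>y\<in>F-{0}. x * y) = (\<Prod>y\<in>F-{0}. y)"
    by (rule prod.reindex_bij_witness[of _ "\<lambda>y. y / x" "\<lambda>y. x * y"])
       (use False x in \<open>auto simp: mult_mem divide_mem\<close>)
  finally show ?thesis
    using finite by simp
qed (use card_ge_2 in simp)

lemma power_CHAR_power_add:
  "(x + y :: 'k) ^ (CHAR('k) ^ e) = x ^ (CHAR('k) ^ e) + y ^ (CHAR('k) ^ e)"
  using freshmans_dream'[OF prime_CHAR HOL.refl] .

lemma power_CHAR_power_inj: "(x :: 'k) ^ (CHAR('k) ^ e) = y ^ (CHAR('k) ^ e) \<Longrightarrow> x = y"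
  using power_CHAR_power_add[of "x - y" y e] by simp

text \<open>If \<open>q = p\<^sup>e m\<close> with \<open>p \<nmid> m\<close> and \<open>m \<ge> 2\<close>, then \<open>(z + 1)\<^sup>m = z\<^sup>m + 1\<close> holds for the
  \<open>q \<ge> m\<close> elements \<open>z = c ^ p ^ e\<close>, \<open>c \<in> F\<close>, hence as polynomials; but the coefficients of
  \<open>z\<close> are \<open>m \<noteq> 0\<close> and \<open>0\<close>.\<close>
lemma card_eq_CHAR_power: "\<exists>e. q = CHAR('k) ^ e"
proof -
  define p where "p = CHAR('k)"
  have p: "prime p" using prime_CHAR p_def by simp
  obtain m where qm: "q = p ^ multiplicity p q * m" and p_ndvd: "\<not> p dvd m"
    using multiplicity_decompose'[of q p] card_ge_2 p by (metis not_prime_unit not_numeral_le_zero)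
  define e where "e = multiplicity p q"
  have qm: "q = p ^ e * m" using qm e_def by simp
  have "m \<noteq> 0" using qm card_ge_2 by (metis mult_0_right not_numeral_le_zero)
  have "m = 1"
  proof (rule ccontr)
    assume "m \<noteq> 1"
    with \<open>m \<noteq> 0\<close> have "m \<ge> 2" by linarith
    define A where "A = (\<lambda>c. c ^ (p ^ e)) ` F"
    have "card A = q"
      unfolding A_def using power_CHAR_power_inj p_def by (intro card_image inj_onI) blast
    have "[:1, 1:] ^ m = monom 1 m + (1 :: 'k poly)"
    proof (rule poly_eqI_degree_lead_coeff[where n = m and A = A])
      show "m \<le> card A"
        using qm \<open>card A = q\<close> \<open>m \<noteq> 0\<close> prime_gt_0_nat[OF p] by simp
      show "degree ([:1, 1:] ^ m :: 'k poly) \<le> m"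
        using degree_power_le[of "[:1, 1 :: 'k:]" m] by simp
      show "degree (monom 1 m + 1 :: 'k poly) \<le> m"
        by (intro degree_add_le) (simp_all add: degree_monom_le)
      show "coeff ([:1, 1:] ^ m) m = coeff (monom 1 m + 1 :: 'k poly) m"
        using \<open>m \<noteq> 0\<close> by (simp add: coeff_linear_poly_power)
      show "poly ([:1, 1:] ^ m) z = poly (monom 1 m + 1) z" if "z \<in> A" for z
      proof -
        obtain c where c: "c \<in> F" "z = c ^ (p ^ e)" using \<open>z \<in> A\<close> unfolding A_def by blast
        have "z ^ m = c" "(z + 1) ^ m = c + 1"
          using power_card_eq_same[of c] power_card_eq_same[of "c + 1"]
            power_CHAR_power_add[of c 1 e] c add_mem one_mem qm p_def
          by (simp_all add: power_mult)
        thus ?thesis by (simp add: poly_monom algebra_simps)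
      qed
    qed
    hence "coeff ([:1, 1:] ^ m) 1 = coeff (monom 1 m + 1 :: 'k poly) 1"
      by simp
    hence "(of_nat m :: 'k) = 0"
      using \<open>m \<ge> 2\<close> by (simp add: coeff_linear_poly_power)
    thus False using p_ndvd p_def of_nat_eq_0_iff_char_dvd by blast
  qed
  thus ?thesis using qm p_def by auto
qed

lemma card_pos [simp]: "q > 0"
  using card_ge_2 by simp

lemma zero_power_card_power [simp]: "(0 :: 'k) ^ (q ^ i) = 0"
  by simp

lemma card_power_eq_CHAR_power: "\<exists>e. q ^ i = CHAR('k) ^ e"
  using card_eq_CHAR_power by (metis power_mult)

lemma add_power_card_power: "(x + y :: 'k) ^ (q ^ i) = x ^ (q ^ i) + y ^ (q ^ i)"
  using card_power_eq_CHAR_power[of i] power_CHAR_power_add by metis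

lemma sum_power_card_power: "(sum f A :: 'k) ^ (q ^ i) = (\<Sum>x\<in>A. f x ^ (q ^ i))"
  using card_power_eq_CHAR_power[of i] freshmans_dream_sum'[OF prime_CHAR] by metis

lemma minus_power_card_power: "(- x :: 'k) ^ (q ^ i) = - (x ^ (q ^ i))"
  using add_power_card_power[of x "- x" i] by (simp add: eq_neg_iff_add_eq_0 add.commute)

lemma diff_power_card_power: "(x - y :: 'k) ^ (q ^ i) = x ^ (q ^ i) - y ^ (q ^ i)"
  using add_power_card_power[of x "- y" i] minus_power_card_power[of y i] by simp

lemma power_card_power_inj: "(x :: 'k) ^ (q ^ i) = y ^ (q ^ i) \<Longrightarrow> x = y"
  using card_power_eq_CHAR_power[of i] power_CHAR_power_inj by metis

lemma power_card_power_mem_same: "x \<in> F \<Longrightarrow> x ^ (q ^ n) = x"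
  by (induction n) (simp_all add: power_mult power_card_eq_same)

end

locale perfect_finite_subfield = finite_subfield F for F :: "'k::field set" +
  assumes perfect: "perfect_field TYPE('k::field)"
begin

lemma power_card_power_surj: "\<exists>x :: 'k. x ^ (q ^ i) = y"
proof -
  have "\<exists>x :: 'k. x ^ (CHAR('k) ^ e) = y" for e y
  proof (induction e arbitrary: y)
    case (Suc e y)
    obtain z where z: "z ^ CHAR('k) = y"
      using perfect prime_CHAR unfolding perfect_field_def by auto
    obtain x where "x ^ (CHAR('k) ^ e) = z" using Suc by blast
    moreover have "x ^ (CHAR('k) ^ Suc e) = (x ^ (CHAR('k) ^ e)) ^ CHAR('k)"
      by (simp add: mult.commute flip: power_mult)
    ultimately show ?case using z by metis
  qed simp
  thus ?thesis using card_power_eq_CHAR_power[of i] by metis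
qed

lemma frob_root_power [simp]: "frob_root q (y :: 'k) ^ q = y"
proof -
  have "\<exists>!x :: 'k. x ^ q = y"
    using power_card_power_surj[of 1 y] power_card_power_inj[of _ 1] by auto
  thus ?thesis unfolding frob_root_def by (rule theI')
qed

text \<open>In \<open>K[[\<sigma>]]\<close>, \<open>\<sigma>\<^sup>n a = froot n a \<sigma>\<^sup>n\<close>.\<close>
abbreviation froot :: "nat \<Rightarrow> 'k \<Rightarrow> 'k" where "froot n \<equiv> frob_root q ^^ n"

lemma froot_power [simp]: "froot n x ^ (q ^ n) = x"
proof (induction n arbitrary: x)
  case (Suc n)
  have "froot (Suc n) x ^ (q ^ Suc n) = (frob_root q (froot n x) ^ q) ^ (q ^ n)"
    by (simp add: power_mult)
  thus ?case using Suc by simp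
qed simp

lemma froot_eq_iff: "froot n x = y \<longleftrightarrow> y ^ (q ^ n) = x"
  using froot_power[of n x] power_card_power_inj[of "froot n x" n y] by auto

lemma froot_power_cancel [simp]: "froot n (x ^ (q ^ n)) = x"
  using froot_eq_iff by blast

lemma froot_mult: "froot n (x * y) = froot n x * froot n y"
  by (simp add: froot_eq_iff power_mult_distrib)

lemma froot_add: "froot n (x + y) = froot n x + froot n y"
  by (simp add: froot_eq_iff add_power_card_power)

lemma froot_sum: "froot n (sum f A) = (\<Sum>a\<in>A. froot n (f a))"
  by (simp add: froot_eq_iff sum_power_card_power)

lemma froot_diff: "froot n (x - y) = froot n x - froot n y"
  by (simp add: froot_eq_iff diff_power_card_power)

lemma froot_0 [simp]: "froot n 0 = 0"
  by (simp add: froot_eq_iff)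

lemma froot_1 [simp]: "froot n 1 = 1"
  by (simp add: froot_eq_iff)

lemma froot_eq_0_iff [simp]: "froot n x = 0 \<longleftrightarrow> x = 0"
  by (auto simp: froot_eq_iff)

lemma froot_add_iter: "froot (m + n) x = froot m (froot n x)"
  by (simp add: funpow_add)

lemma froot_add_power: "froot (m + n) (x ^ (q ^ n)) = froot m x"
  by (simp add: froot_add_iter)

end

section \<open>The skew polynomial ring \<open>K{\<tau>}\<close> and matrices over it\<close>

context finite_subfield
begin

abbreviation tau_times :: "'k poly \<Rightarrow> 'k poly \<Rightarrow> 'k poly" (infixl "\<star>" 70)
  where "f \<star> g \<equiv> tau_mult q f g"

lemma coeff_tau_mult: "coeff (f \<star> g) n = (\<Sum>i\<le>n. coeff f i * coeff g (n - i) ^ (q ^ i))"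
proof -
  define t where "t i = (if i \<le> n then coeff f i * coeff g (n - i) ^ (q ^ i) else 0)" for i
  have inner: "(\<Sum>j\<le>degree g. if i + j = n then coeff f i * coeff g j ^ (q ^ i) else 0) = t i" for i
  proof -
    have "(\<Sum>j\<le>degree g. if i + j = n then coeff f i * coeff g j ^ (q ^ i) else 0)
        = (\<Sum>j\<le>degree g. if j = n - i then t i else 0)"
      unfolding t_def by (rule sum.cong) auto
    also have "\<dots> = t i"
      by (auto simp: t_def coeff_eq_0)
    finally show ?thesis .
  qed
  have "coeff (f \<star> g) n = (\<Sum>i\<le>degree f. t i)"
    by (simp add: tau_mult_def coeff_sum coeff_monom inner)
  also have "\<dots> = (\<Sum>i\<le>max n (degree f). t i)"
    by (rule sum.mono_neutral_left) (auto simp: t_def coeff_eq_0)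
  also have "\<dots> = (\<Sum>i\<le>n. t i)"
    by (rule sum.mono_neutral_right) (auto simp: t_def)
  finally show ?thesis by (simp add: t_def)
qed

lemma tau_mult_add_left: "(f + g) \<star> h = f \<star> h + g \<star> h"
  by (rule poly_eqI) (simp add: coeff_tau_mult distrib_right sum.distrib)

lemma tau_mult_add_right: "f \<star> (g + h) = f \<star> g + f \<star> h"
  by (rule poly_eqI) (simp add: coeff_tau_mult add_power_card_power distrib_left sum.distrib)

lemma tau_mult_0_left [simp]: "0 \<star> h = 0"
  by (rule poly_eqI) (simp add: coeff_tau_mult)

lemma tau_mult_0_right [simp]: "h \<star> 0 = 0"
  by (rule poly_eqI) (simp add: coeff_tau_mult)

lemma tau_mult_sum_left: "sum f A \<star> h = (\<Sum>a\<in>A. f a \<star> h)"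
  by (induction A rule: infinite_finite_induct) (simp_all add: tau_mult_add_left)

lemma tau_mult_sum_right: "h \<star> sum f A = (\<Sum>a\<in>A. h \<star> f a)"
  by (induction A rule: infinite_finite_induct) (simp_all add: tau_mult_add_right)

lemma tau_mult_smult_left: "smult c f \<star> h = smult c (f \<star> h)"
  by (rule poly_eqI) (simp add: coeff_tau_mult sum_distrib_left mult.assoc)

lemma tau_mult_const_left: "[:c:] \<star> h = smult c h"
proof (rule poly_eqI)
  fix n
  have "coeff ([:c:] \<star> h) n = (\<Sum>i\<le>n. if i = 0 then c * coeff h n else 0)"
    unfolding coeff_tau_mult by (rule sum.cong) (auto simp: coeff_pCons split: nat.splits)
  thus "coeff ([:c:] \<star> h) n = coeff (smult c h) n" by simp
qed

lemma tau_mult_one_left [simp]: "1 \<star> h = h"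
  using tau_mult_const_left[of 1 h] by (simp add: one_pCons)

lemma coeff_tau_mult_const_right: "coeff (f \<star> [:c:]) n = coeff f n * c ^ (q ^ n)"
proof -
  have "coeff (f \<star> [:c:]) n = (\<Sum>i\<le>n. if i = n then coeff f n * c ^ (q ^ n) else 0)"
    unfolding coeff_tau_mult by (rule sum.cong) (auto simp: coeff_pCons split: nat.splits)
  thus ?thesis by simp
qed

lemma tau_mult_one_right [simp]: "h \<star> 1 = h"
  by (rule poly_eqI) (simp add: coeff_tau_mult_const_right[of h 1, unfolded one_pCons[symmetric]])

lemma tau_mult_const_right_mem: "c \<in> F \<Longrightarrow> f \<star> [:c:] = smult c f"
  by (rule poly_eqI) (simp add: coeff_tau_mult_const_right power_card_power_mem_same mult.commute)

lemma tau_mult_smult_right_mem: "c \<in> F \<Longrightarrow> f \<star> smult c g = smult c (f \<star> g)"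
  by (rule poly_eqI)
     (simp add: coeff_tau_mult sum_distrib_left power_mult_distrib power_card_power_mem_same
        mult_ac)

lemma degree_tau_mult_le: "degree (f \<star> g) \<le> degree f + degree g"
proof (rule degree_le, intro allI impI)
  fix n assume n: "n > degree f + degree g"
  have "coeff f i * coeff g (n - i) ^ (q ^ i) = 0" for i
    using n by (cases "i \<le> degree f") (simp_all add: coeff_eq_0)
  thus "coeff (f \<star> g) n = 0"
    unfolding coeff_tau_mult by (simp only: sum.neutral_const)
qed

lemma tau_mult_assoc: "(f \<star> g) \<star> h = f \<star> (g \<star> h)"
proof (rule poly_eqI)
  fix n
  define G where "G i j l = coeff f i * coeff g j ^ (q ^ i) * coeff h l ^ (q ^ (i + j))" for i j l
  have "coeff ((f \<star> g) \<star> h) n = (\<Sum>k\<le>n. \<Sum>i\<le>k. G i (k - i) (n - k))"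
    unfolding coeff_tau_mult G_def by (simp add: sum_distrib_right)
  also have "\<dots> = (\<Sum>k\<le>n. \<Sum>i\<le>k. G i (k - i) (n - i - (k - i)))"
    by (intro sum.cong refl) auto
  also have "\<dots> = (\<Sum>(i, j)\<in>{(i, j). i + j \<le> n}. G i j (n - i - j))"
    by (rule sum.triangle_reindex_eq[symmetric])
  also have "{(i, j). i + j \<le> n} = Sigma {..n} (\<lambda>i. {..n - i})"
    by auto
  also have "(\<Sum>(i, j)\<in>Sigma {..n} (\<lambda>i. {..n - i}). G i j (n - i - j))
      = coeff (f \<star> (g \<star> h)) n"
    unfolding coeff_tau_mult G_def
    by (simp add: sum.Sigma sum_power_card_power sum_distrib_left power_mult_distrib mult_ac
          flip: power_mult power_add)
  finally show "coeff ((f \<star> g) \<star> h) n = coeff (f \<star> (g \<star> h)) n" .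
qed

lemma coeff_tau_mult_degree_le:
  assumes "degree f \<le> A" "degree g \<le> M"
  shows "coeff (f \<star> g) n = (\<Sum>i | i \<le> n \<and> i \<le> A \<and> n - i \<le> M. coeff f i * coeff g (n - i) ^ (q ^ i))"
  unfolding coeff_tau_mult
  by (rule sum.mono_neutral_right) (use assms in \<open>auto dest!: le_degree\<close>)

lemma monom_tau_mult_const: "monom c l \<star> [:d:] = monom (c * d ^ (q ^ l)) l"
  by (rule poly_eqI) (simp add: coeff_tau_mult_const_right coeff_monom)

lemma tau_mult_const_add_right: "f \<star> [:c + d:] = f \<star> [:c:] + f \<star> [:d:]"
  by (metis add_pCons add_0 tau_mult_add_right)

lemma tau_mult_const_mult_right: "f \<star> [:c:] \<star> [:d:] = f \<star> [:c * d:]"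
  by (simp add: tau_mult_assoc tau_mult_const_left)

definition row_mult :: "('n::finite \<Rightarrow> 'k poly) \<Rightarrow> ('n \<Rightarrow> 'n \<Rightarrow> 'k poly) \<Rightarrow> ('n \<Rightarrow> 'k poly)"
  where "row_mult X A = (\<lambda>j. \<Sum>i\<in>UNIV. X i \<star> A i j)"

definition col_mult :: "('n::finite \<Rightarrow> 'n \<Rightarrow> 'k poly) \<Rightarrow> ('n \<Rightarrow> 'k poly) \<Rightarrow> ('n \<Rightarrow> 'k poly)"
  where "col_mult A v = (\<lambda>i. \<Sum>j\<in>UNIV. A i j \<star> v j)"

abbreviation mat_times :: "('n::finite \<Rightarrow> 'n \<Rightarrow> 'k poly) \<Rightarrow> ('n \<Rightarrow> 'n \<Rightarrow> 'k poly) \<Rightarrow> ('n \<Rightarrow> 'n \<Rightarrow> 'k poly)"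
  where "mat_times A B \<equiv> tmat_mult q A B"

abbreviation mat_power :: "('n::finite \<Rightarrow> 'n \<Rightarrow> 'k poly) \<Rightarrow> nat \<Rightarrow> ('n \<Rightarrow> 'n \<Rightarrow> 'k poly)"
  where "mat_power A k \<equiv> tmat_pow q A k"

lemma mat_times_assoc: "mat_times (mat_times A B) C = mat_times A (mat_times B C)"
  unfolding tmat_mult_def
  by (simp add: tau_mult_sum_left tau_mult_sum_right tau_mult_assoc)
     (rule ext, rule ext, rule sum.swap)

lemma mat_times_one_left [simp]: "mat_times tmat_one A = A"
proof -
  have "(if i = k then 1 else 0) \<star> A k j = (if i = k then A k j else 0)" for i k j
    by simp
  thus ?thesis unfolding tmat_mult_def tmat_one_def by simp
qed

lemma mat_times_one_right [simp]: "mat_times A tmat_one = A"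
proof -
  have "A i k \<star> (if k = j then 1 else 0) = (if k = j then A i k else 0)" for i k j
    by simp
  thus ?thesis unfolding tmat_mult_def tmat_one_def by simp
qed

lemma mat_power_0 [simp]: "mat_power A 0 = tmat_one"
  by (simp add: tmat_pow_def)

lemma mat_power_Suc: "mat_power A (Suc k) = mat_times A (mat_power A k)"
  by (simp add: tmat_pow_def)

lemma mat_power_Suc': "mat_power A (Suc k) = mat_times (mat_power A k) A"
proof (induction k)
  case 0
  show ?case by (simp add: mat_power_Suc)
next
  case (Suc k)
  have "mat_power A (Suc (Suc k)) = mat_times A (mat_times (mat_power A k) A)"
    by (simp only: mat_power_Suc[of A "Suc k"] Suc)
  also have "\<dots> = mat_times (mat_power A (Suc k)) A"
    by (simp only: mat_power_Suc mat_times_assoc)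
  finally show ?case .
qed

lemma row_mult_assoc: "row_mult (row_mult X A) B = row_mult X (mat_times A B)"
  unfolding row_mult_def tmat_mult_def
  by (simp add: tau_mult_sum_left tau_mult_sum_right tau_mult_assoc) (rule ext, rule sum.swap)

lemma col_mult_assoc: "col_mult A (col_mult B v) = col_mult (mat_times A B) v"
  unfolding col_mult_def tmat_mult_def
  by (simp add: tau_mult_sum_left tau_mult_sum_right tau_mult_assoc) (rule ext, rule sum.swap)

lemma row_mult_one [simp]: "row_mult X tmat_one = X"
proof -
  have "X i \<star> (if i = j then 1 else 0) = (if i = j then X i else 0)" for i j
    by simp
  thus ?thesis unfolding row_mult_def tmat_one_def by simp
qed

lemma col_mult_one [simp]: "col_mult tmat_one v = v"
proof -
  have "(if i = j then 1 else 0) \<star> v j = (if i = j then v j else 0)" for i j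
    by simp
  thus ?thesis unfolding col_mult_def tmat_one_def by simp
qed

lemma row_mult_add: "row_mult (\<lambda>i. X i + Y i) A j = row_mult X A j + row_mult Y A j"
  unfolding row_mult_def by (simp add: tau_mult_add_left sum.distrib)

lemma row_mult_zero [simp]: "row_mult (\<lambda>i. 0) A j = 0"
  unfolding row_mult_def by simp

lemma row_mult_smult: "row_mult (\<lambda>i. smult c (X i)) A j = smult c (row_mult X A j)"
  unfolding row_mult_def by (simp add: tau_mult_smult_left smult_sum_right)

lemma row_mult_sum: "row_mult (\<lambda>i. \<Sum>s\<in>S. X s i) A j = (\<Sum>s\<in>S. row_mult (X s) A j)"
  unfolding row_mult_def by (simp add: tau_mult_sum_left) (rule sum.swap)

lemma col_mult_add: "col_mult A (\<lambda>i. X i + Y i) j = col_mult A X j + col_mult A Y j"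
  unfolding col_mult_def by (simp add: tau_mult_add_right sum.distrib)

lemma col_mult_zero [simp]: "col_mult A (\<lambda>i. 0) j = 0"
  unfolding col_mult_def by simp

lemma col_mult_const_right: "col_mult A (\<lambda>i. X i \<star> [:c:]) j = col_mult A X j \<star> [:c:]"
  unfolding col_mult_def by (simp add: tau_mult_sum_left tau_mult_assoc)

lemma col_mult_sum: "col_mult A (\<lambda>i. \<Sum>s\<in>S. X s i) j = (\<Sum>s\<in>S. col_mult A (X s) j)"
  unfolding col_mult_def by (simp add: tau_mult_sum_right) (rule sum.swap)

lemma degree_row_mult_le:
  "(\<And>i. degree (X i) \<le> A) \<Longrightarrow> (\<And>i. degree (D i j) \<le> M) \<Longrightarrow> degree (row_mult X D j) \<le> A + M"
  unfolding row_mult_def by (intro degree_sum_le order.trans[OF degree_tau_mult_le] add_mono) auto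

lemma degree_col_mult_le:
  "(\<And>j. degree (D i j) \<le> A) \<Longrightarrow> (\<And>j. degree (v j) \<le> M) \<Longrightarrow> degree (col_mult D v i) \<le> A + M"
  unfolding col_mult_def by (intro degree_sum_le order.trans[OF degree_tau_mult_le] add_mono) auto

end

section \<open>The \<open>K[t]\<close>-modules \<open>Hom(E, G\<^sub>a)\<close> and \<open>Hom(G\<^sub>a, E)\<close>\<close>

locale poly_vec_action =
  fixes act :: "'k::field poly \<Rightarrow> ('n::finite \<Rightarrow> 'k poly) \<Rightarrow> ('n \<Rightarrow> 'k poly)"
  assumes act_add: "act (p + p') m j = act p m j + act p' m j"
    and act_act: "act p (act p' m) = act (p * p') m"
    and act_one: "act 1 m = m"
    and act_add_vec: "act p (\<lambda>i. X i + Y i) j = act p X j + act p Y j"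
    and act_zero_vec: "act p (\<lambda>i. 0) j = 0"
begin

definition in_span :: "('n \<Rightarrow> 'k poly) set \<Rightarrow> ('n \<Rightarrow> 'k poly) \<Rightarrow> bool"
  where "in_span S m \<longleftrightarrow> (\<exists>c. \<forall>j. m j = (\<Sum>g\<in>S. act (c g) g j))"

lemma act_zero: "act 0 m j = 0"
proof -
  have "act 0 m j + act 0 m j = act 0 m j + 0"
    using act_add[of 0 0 m j] by (metis add_0 add.right_neutral)
  thus ?thesis by (rule add_left_imp_eq)
qed

lemma act_sum_vec: "finite S \<Longrightarrow> act p (\<lambda>i. \<Sum>s\<in>S. X s i) j = (\<Sum>s\<in>S. act p (X s) j)"
  by (induction S rule: finite_induct) (simp_all add: act_zero_vec act_add_vec)

lemma in_span_zero: "in_span S (\<lambda>j. 0)"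
  unfolding in_span_def by (rule exI[of _ "\<lambda>_. 0"]) (simp add: act_zero)

lemma in_span_add:
  assumes "in_span S m" "in_span S m'"
  shows "in_span S (\<lambda>j. m j + m' j)"
proof -
  obtain c c' where "\<And>j. m j = (\<Sum>g\<in>S. act (c g) g j)" "\<And>j. m' j = (\<Sum>g\<in>S. act (c' g) g j)"
    using assms unfolding in_span_def by blast
  hence "m j + m' j = (\<Sum>g\<in>S. act (c g + c' g) g j)" for j
    by (simp add: act_add sum.distrib)
  thus ?thesis unfolding in_span_def by (intro exI[of _ "\<lambda>g. c g + c' g"] allI)
qed

lemma in_span_sum:
  "finite I \<Longrightarrow> (\<And>i. i \<in> I \<Longrightarrow> in_span S (f i)) \<Longrightarrow> in_span S (\<lambda>j. \<Sum>i\<in>I. f i j)"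
  by (induction I rule: finite_induct) (simp_all add: in_span_zero in_span_add)

lemma in_span_act:
  assumes "finite S" "in_span S m"
  shows "in_span S (act p m)"
proof -
  obtain c where "m = (\<lambda>j. \<Sum>g\<in>S. act (c g) g j)"
    using assms(2) unfolding in_span_def by blast
  hence "act p m j = (\<Sum>g\<in>S. act (p * c g) g j)" for j
    by (simp add: act_sum_vec[OF assms(1)] act_act)
  thus ?thesis unfolding in_span_def by (intro exI[of _ "\<lambda>g. p * c g"] allI)
qed

lemma in_span_generator:
  assumes "finite S" "g \<in> S"
  shows "in_span S g"
proof -
  have "act (if h = g then 1 else 0) h j = (if h = g then g j else 0)" for h j
    by (simp add: act_one act_zero)
  hence "g j = (\<Sum>h\<in>S. act (if h = g then 1 else 0) h j)" for j
    using assms by simp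
  thus ?thesis unfolding in_span_def by (intro exI[of _ "\<lambda>h. if h = g then 1 else 0"] allI)
qed

lemma in_span_if_degree_less:
  assumes scale: "\<And>j c l. \<exists>c'. act [:c':] (monom_vec j 1 l) = monom_vec j c l"
    and "\<And>j. degree (m j) \<le> l" "l < s"
  shows "in_span (monom_vecs_below s) m"
proof -
  have "in_span (monom_vecs_below s) (monom_vec j (coeff (m j) l') l')" if "l' \<le> l" for j l'
  proof -
    obtain c' where c': "act [:c':] (monom_vec j 1 l') = monom_vec j (coeff (m j) l') l'"
      using scale by blast
    have "monom_vec j 1 l' \<in> monom_vecs_below s"
      using that \<open>l < s\<close> unfolding monom_vecs_below_def
      by (intro CollectI exI[of _ j] exI[of _ l'] conjI) auto
    hence "in_span (monom_vecs_below s) (act [:c':] (monom_vec j 1 l'))"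
      by (intro in_span_act in_span_generator finite_monom_vecs_below)
    thus ?thesis by (simp only: c')
  qed
  hence "in_span (monom_vecs_below s) (\<lambda>j. \<Sum>j'\<in>UNIV. \<Sum>l'\<le>l. monom_vec j' (coeff (m j') l') l' j)"
    by (intro in_span_sum) auto
  thus ?thesis
    using vec_eq_sum_monom_vecs[of m l] assms(2) by simp
qed

lemma finitely_generated_if_degree_reducible:
  assumes scale: "\<And>j c l. \<exists>c'. act [:c':] (monom_vec j 1 l) = monom_vec j c l"
    and reduce: "\<And>m l. s \<le> l \<Longrightarrow> (\<And>j. degree (m j) \<le> l) \<Longrightarrow>
       \<exists>Q. (\<forall>i. degree (Q i) < l) \<and> (\<forall>j. degree (m j - act a Q j) < s)"
  shows "\<exists>S. finite S \<and> (\<forall>m. in_span S m)"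
proof -
  have "in_span (monom_vecs_below s) m" if "\<And>j. degree (m j) \<le> l" for l m
    using that
  proof (induction l arbitrary: m rule: less_induct)
    case (less l)
    show ?case
    proof (cases "l < s")
      case False
      then obtain Q where Q: "\<And>i. degree (Q i) < l" and r: "\<And>j. degree (m j - act a Q j) < s"
        using reduce[of l m] less.prems by force
      have "0 < l"
        using Q[of undefined] by linarith
      moreover have "degree (Q i) \<le> l - 1" for i
        using Q[of i] by linarith
      ultimately have "in_span (monom_vecs_below s) Q"
        by (intro less.IH[of "l - 1"]) simp_all
      moreover have "in_span (monom_vecs_below s) (\<lambda>j. m j - act a Q j)"
      proof (rule less.IH[of "s - 1"])
        show "s - 1 < l" "degree (m j - act a Q j) \<le> s - 1" for j
          using r[of undefined] r[of j] False by linarith+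
      qed
      ultimately have "in_span (monom_vecs_below s) (\<lambda>j. act a Q j + (m j - act a Q j))"
        by (intro in_span_add in_span_act finite_monom_vecs_below)
      thus ?thesis by simp
    qed (rule in_span_if_degree_less[OF scale less.prems])
  qed
  moreover have "degree (m j) \<le> Max (range (\<lambda>j. degree (m j)))" for m :: "'n \<Rightarrow> 'k poly" and j
    by (rule Max_ge) auto
  ultimately show ?thesis
    using finite_monom_vecs_below by blast
qed

end

context finite_subfield
begin

abbreviation row_action :: "('n::finite \<Rightarrow> 'n \<Rightarrow> 'k poly) \<Rightarrow> 'k poly \<Rightarrow> ('n \<Rightarrow> 'k poly) \<Rightarrow> ('n \<Rightarrow> 'k poly)"
  where "row_action D \<equiv> row_act q D"

abbreviation col_action :: "('n::finite \<Rightarrow> 'n \<Rightarrow> 'k poly) \<Rightarrow> 'k poly \<Rightarrow> ('n \<Rightarrow> 'k poly) \<Rightarrow> ('n \<Rightarrow> 'k poly)"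
  where "col_action D \<equiv> col_act q D"

lemma coeffs_subset_imp_coeff_mem: "set (coeffs a) \<subseteq> F \<Longrightarrow> coeff a k \<in> F"
  using forall_coeffs_conv[of "\<lambda>c. c \<in> F" a] zero_mem by auto

lemma row_act_eq_sum:
  "degree p \<le> N \<Longrightarrow> row_action D p m j = (\<Sum>k\<le>N. smult (coeff p k) (row_mult m (mat_power D k) j))"
  unfolding row_act_def row_mult_def tau_mult_const_left
  by (rule sum.mono_neutral_left) (auto simp: coeff_eq_0)

lemma row_act_add: "row_action D (p + p') m j = row_action D p m j + row_action D p' m j"
  using row_act_eq_sum[of p "max (degree p) (degree p')" D m j]
    row_act_eq_sum[of p' "max (degree p) (degree p')" D m j]
    row_act_eq_sum[of "p + p'" "max (degree p) (degree p')" D m j]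
  by (simp add: degree_add_le_max sum.distrib smult_add_left)

lemma row_act_smult: "row_action D (smult c p) m j = smult c (row_action D p m j)"
proof -
  have "row_action D (smult c p) m j
      = (\<Sum>k\<le>degree p. smult (coeff (smult c p) k) (row_mult m (mat_power D k) j))"
    by (rule row_act_eq_sum) (rule degree_smult_le)
  thus ?thesis by (simp add: row_act_eq_sum[OF order_refl] smult_sum_right)
qed

lemma row_act_pCons:
  "row_action D (pCons c p) m j = smult c (m j) + row_mult (row_action D p m) D j"
proof -
  have p: "row_action D p m = (\<lambda>j. \<Sum>k\<le>degree p. smult (coeff p k) (row_mult m (mat_power D k) j))"
    by (rule ext) (rule row_act_eq_sum[OF order_refl])
  have "row_action D (pCons c p) m j
      = (\<Sum>k\<le>Suc (degree p). smult (coeff (pCons c p) k) (row_mult m (mat_power D k) j))"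
    by (rule row_act_eq_sum) (rule degree_pCons_le)
  also have "\<dots> = smult c (m j)
      + (\<Sum>k\<le>degree p. smult (coeff p k) (row_mult (row_mult m (mat_power D k)) D j))"
    by (subst sum.atMost_Suc_shift) (simp add: row_mult_assoc mat_power_Suc')
  also have "\<dots> = smult c (m j) + row_mult (row_action D p m) D j"
    by (simp add: p row_mult_sum row_mult_smult)
  finally show ?thesis .
qed

lemma row_act_mult: "row_action D a (row_action D p m) = row_action D (a * p) m"
proof (induction a)
  case (pCons c a)
  show ?case
    by (rule ext) (simp add: row_act_pCons pCons.IH row_act_add row_act_smult)
qed (simp add: row_act_def)

lemma poly_vec_action_row_act: "poly_vec_action (row_action D)"
proof
  show "row_action D 1 m = m" for m
    by (rule ext) (simp add: row_act_eq_sum[of 1 0])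
  show "row_action D p (\<lambda>i. X i + Y i) j = row_action D p X j + row_action D p Y j" for p X Y j
    by (simp add: row_act_eq_sum[OF order_refl] row_mult_add smult_add_right sum.distrib)
  show "row_action D p (\<lambda>i. 0) j = 0" for p j
    by (simp add: row_act_eq_sum[OF order_refl])
qed (simp_all add: row_act_add row_act_mult)

lemma row_mult_phi_eval:
  assumes "set (coeffs a) \<subseteq> F"
  shows "row_mult X (phi_eval q D a) j = row_action D a X j"
  unfolding row_mult_def phi_eval_def row_act_eq_sum[OF order_refl]
  by (simp add: tau_mult_sum_right tau_mult_smult_right_mem coeffs_subset_imp_coeff_mem[OF assms]
      smult_sum_right) (rule sum.swap)

lemma col_act_eq_sum:
  "degree p \<le> N \<Longrightarrow> col_action D p v i = (\<Sum>k\<le>N. col_mult (mat_power D k) v i \<star> [:coeff p k:])"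
  unfolding col_act_def col_mult_def
  by (rule sum.mono_neutral_left) (auto simp: coeff_eq_0)

lemma col_act_add: "col_action D (p + p') v i = col_action D p v i + col_action D p' v i"
  using col_act_eq_sum[of p "max (degree p) (degree p')" D v i]
    col_act_eq_sum[of p' "max (degree p) (degree p')" D v i]
    col_act_eq_sum[of "p + p'" "max (degree p) (degree p')" D v i]
  by (simp add: degree_add_le_max sum.distrib tau_mult_const_add_right)

lemma col_act_smult: "col_action D (smult c p) v i = col_action D p v i \<star> [:c:]"
proof -
  have "col_action D (smult c p) v i
      = (\<Sum>k\<le>degree p. col_mult (mat_power D k) v i \<star> [:coeff (smult c p) k:])"
    by (rule col_act_eq_sum) (rule degree_smult_le)
  thus ?thesis
    by (simp add: col_act_eq_sum[OF order_refl] tau_mult_sum_left tau_mult_const_mult_right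
        mult.commute)
qed

lemma col_act_pCons:
  "col_action D (pCons c p) v i = v i \<star> [:c:] + col_mult D (col_action D p v) i"
proof -
  have p: "col_action D p v = (\<lambda>i. \<Sum>k\<le>degree p. col_mult (mat_power D k) v i \<star> [:coeff p k:])"
    by (rule ext) (rule col_act_eq_sum[OF order_refl])
  have "col_action D (pCons c p) v i
      = (\<Sum>k\<le>Suc (degree p). col_mult (mat_power D k) v i \<star> [:coeff (pCons c p) k:])"
    by (rule col_act_eq_sum) (rule degree_pCons_le)
  also have "\<dots> = v i \<star> [:c:]
      + (\<Sum>k\<le>degree p. col_mult D (col_mult (mat_power D k) v) i \<star> [:coeff p k:])"
    by (subst sum.atMost_Suc_shift) (simp add: col_mult_assoc mat_power_Suc)
  also have "\<dots> = v i \<star> [:c:] + col_mult D (col_action D p v) i"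
    by (simp add: p col_mult_sum col_mult_const_right)
  finally show ?thesis .
qed

lemma col_act_mult: "col_action D a (col_action D p v) = col_action D (a * p) v"
proof (induction a)
  case (pCons c a)
  show ?case
    by (rule ext) (simp add: col_act_pCons pCons.IH col_act_add col_act_smult)
qed (simp add: col_act_def)

lemma poly_vec_action_col_act: "poly_vec_action (col_action D)"
proof
  show "col_action D 1 v = v" for v
    by (rule ext) (simp add: col_act_eq_sum[of 1 0] flip: one_pCons)
  show "col_action D p (\<lambda>i. X i + Y i) j = col_action D p X j + col_action D p Y j" for p X Y j
    by (simp add: col_act_eq_sum[OF order_refl] col_mult_add tau_mult_add_left sum.distrib)
  show "col_action D p (\<lambda>i. 0) j = 0" for p j
    by (simp add: col_act_eq_sum[OF order_refl])
qed (simp_all add: col_act_add col_act_mult)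

lemma col_mult_phi_eval:
  assumes "set (coeffs a) \<subseteq> F"
  shows "col_mult (phi_eval q D a) v i = col_action D a v i"
  unfolding col_mult_def phi_eval_def col_act_eq_sum[OF order_refl]
  by (simp add: tau_mult_sum_left tau_mult_smult_left tau_mult_const_right_mem
      coeffs_subset_imp_coeff_mem[OF assms] smult_sum_right) (rule sum.swap)

end

section \<open>Skew power series \<open>K[[\<sigma>]]\<close>\<close>

context perfect_finite_subfield
begin

abbreviation sig_times :: "(nat \<Rightarrow> 'k) \<Rightarrow> (nat \<Rightarrow> 'k) \<Rightarrow> (nat \<Rightarrow> 'k)" (infixl "\<odot>" 70)
  where "a \<odot> b \<equiv> sig_mult q a b"

lemma sig_mult_apply: "(a \<odot> b) n = (\<Sum>i\<le>n. a i * froot i (b (n - i)))"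
  unfolding sig_mult_def by simp

lemma sig_mult_assoc: "(a \<odot> b) \<odot> c = a \<odot> (b \<odot> c)"
proof (rule ext)
  fix n
  define G where "G i j l = a i * froot i (b j) * froot (i + j) (c l)" for i j l
  have "((a \<odot> b) \<odot> c) n = (\<Sum>k\<le>n. \<Sum>i\<le>k. G i (k - i) (n - k))"
    unfolding sig_mult_apply G_def by (simp add: sum_distrib_right)
  also have "\<dots> = (\<Sum>k\<le>n. \<Sum>i\<le>k. G i (k - i) (n - i - (k - i)))"
    by (intro sum.cong refl) auto
  also have "\<dots> = (\<Sum>(i, j)\<in>{(i, j). i + j \<le> n}. G i j (n - i - j))"
    by (rule sum.triangle_reindex_eq[symmetric])
  also have "{(i, j). i + j \<le> n} = Sigma {..n} (\<lambda>i. {..n - i})"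
    by auto
  also have "(\<Sum>(i, j)\<in>Sigma {..n} (\<lambda>i. {..n - i}). G i j (n - i - j)) = (a \<odot> (b \<odot> c)) n"
    unfolding sig_mult_apply G_def
    by (simp add: sum.Sigma froot_sum froot_mult sum_distrib_left mult_ac froot_add_iter)
  finally show "((a \<odot> b) \<odot> c) n = (a \<odot> (b \<odot> c)) n" .
qed

lemma sig_mult_add_left: "((\<lambda>n. a n + b n) \<odot> c) n = (a \<odot> c) n + (b \<odot> c) n"
  unfolding sig_mult_apply by (simp add: distrib_right sum.distrib)

lemma sig_mult_add_right: "(a \<odot> (\<lambda>n. b n + c n)) n = (a \<odot> b) n + (a \<odot> c) n"
  unfolding sig_mult_apply by (simp add: froot_add distrib_left sum.distrib)

lemma sig_mult_diff_left: "((\<lambda>n. a n - b n) \<odot> c) n = (a \<odot> c) n - (b \<odot> c) n"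
  unfolding sig_mult_apply by (simp add: left_diff_distrib sum_subtractf)

lemma sig_mult_diff_right: "(a \<odot> (\<lambda>n. b n - c n)) n = (a \<odot> b) n - (a \<odot> c) n"
  unfolding sig_mult_apply by (simp add: froot_diff right_diff_distrib sum_subtractf)

lemma sig_mult_sum_left: "((\<lambda>n. \<Sum>s\<in>S. f s n) \<odot> c) n = (\<Sum>s\<in>S. (f s \<odot> c) n)"
  unfolding sig_mult_apply by (simp add: sum_distrib_right) (rule sum.swap)

lemma sig_mult_sum_right: "(a \<odot> (\<lambda>n. \<Sum>s\<in>S. f s n)) n = (\<Sum>s\<in>S. (a \<odot> f s) n)"
  unfolding sig_mult_apply by (simp add: froot_sum sum_distrib_left) (rule sum.swap)

lemma sig_mult_one_left [simp]: "sig_one \<odot> a = a"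
proof (rule ext)
  fix n
  have "(sig_one \<odot> a) n = (\<Sum>i\<le>n. if i = 0 then a n else 0)"
    unfolding sig_mult_apply sig_one_def by (rule sum.cong) auto
  thus "(sig_one \<odot> a) n = a n" by simp
qed

lemma sig_mult_one_right [simp]: "a \<odot> sig_one = a"
proof (rule ext)
  fix n
  have "(a \<odot> sig_one) n = (\<Sum>i\<le>n. if i = n then a n else 0)"
    unfolding sig_mult_apply sig_one_def by (rule sum.cong) auto
  thus "(a \<odot> sig_one) n = a n" by simp
qed

lemma sig_mult_zero_left [simp]: "(\<lambda>_. 0) \<odot> a = (\<lambda>_. 0)"
  unfolding sig_mult_def by simp

lemma sig_mult_zero_right [simp]: "a \<odot> (\<lambda>_. 0) = (\<lambda>_. 0)"
  unfolding sig_mult_def by simp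

lemma sig_mult_vanishes_left: "(\<And>n. n < N \<Longrightarrow> a n = 0) \<Longrightarrow> n < N \<Longrightarrow> (a \<odot> b) n = 0"
  unfolding sig_mult_apply by (intro sum.neutral) auto

lemma sig_mult_vanishes_right: "(\<And>n. n < N \<Longrightarrow> b n = 0) \<Longrightarrow> n < N \<Longrightarrow> (a \<odot> b) n = 0"
  unfolding sig_mult_apply by (intro sum.neutral) auto

lemma sig_mult_sig_pow_right: "(y \<odot> sig_pow \<nu>) n = (if \<nu> \<le> n then y (n - \<nu>) else 0)"
proof -
  have "(y \<odot> sig_pow \<nu>) n = (\<Sum>i\<le>n. if i = n - \<nu> \<and> \<nu> \<le> n then y (n - \<nu>) else 0)"
    unfolding sig_mult_apply sig_pow_def by (rule sum.cong) auto
  thus ?thesis by (simp add: sum.delta' split: if_splits)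
qed

lemma sig_mult_sig_pow_left: "(sig_pow \<nu> \<odot> y) n = (if \<nu> \<le> n then froot \<nu> (y (n - \<nu>)) else 0)"
proof -
  have "(sig_pow \<nu> \<odot> y) n = (\<Sum>i\<le>n. if i = \<nu> then froot \<nu> (y (n - \<nu>)) else 0)"
    unfolding sig_mult_apply sig_pow_def by (rule sum.cong) auto
  thus ?thesis by simp
qed

lemma sig_mult_froot: "((\<lambda>n. froot M (a n)) \<odot> (\<lambda>n. froot M (b n))) n = froot M ((a \<odot> b) n)"
  unfolding sig_mult_apply by (simp add: froot_sum froot_mult froot_add_iter[symmetric] add.commute)

abbreviation sshift :: "nat \<Rightarrow> 'k poly \<Rightarrow> nat \<Rightarrow> 'k" where "sshift \<equiv> sigma_shift q"

lemma sigma_shift_apply: "sshift N f k = (if k \<le> N then froot N (coeff f (N - k)) else 0)"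
  unfolding sigma_shift_def by simp

lemma sigma_shift_diff: "sshift N (f - g) k = sshift N f k - sshift N g k"
  by (simp add: sigma_shift_apply froot_diff)

lemma sigma_shift_sum: "sshift N (sum f S) k = (\<Sum>s\<in>S. sshift N (f s) k)"
  by (simp add: sigma_shift_apply froot_sum coeff_sum)

lemma degree_le_if_sigma_shift_vanishes:
  assumes "degree f \<le> N" and "\<And>k. k < K \<Longrightarrow> k \<le> N \<Longrightarrow> sshift N f k = 0"
  shows "degree f \<le> N - K"
proof (rule degree_le, intro allI impI)
  fix l assume "N - K < l"
  show "coeff f l = 0"
  proof (cases "l \<le> N")
    case True
    thus ?thesis using assms(2)[of "N - l"] \<open>N - K < l\<close> by (simp add: sigma_shift_apply)
  qed (use assms(1) in \<open>simp add: coeff_eq_0\<close>)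
qed

text \<open>In \<open>K[[\<sigma>]]\<close>: \<open>\<sigma>\<^sup>A\<^sup>+\<^sup>M f g = (\<sigma>\<^sup>M (\<sigma>\<^sup>A f) \<sigma>\<^sup>-\<^sup>M) (\<sigma>\<^sup>M g)\<close>, and conjugation by
  \<open>\<sigma>\<^sup>M\<close> takes \<open>M\<close>-th roots of coefficients.\<close>
lemma sigma_shift_tau_mult:
  assumes "degree f \<le> A" "degree g \<le> M"
  shows "sshift (A + M) (f \<star> g) k = ((\<lambda>n. froot M (sshift A f n)) \<odot> sshift M g) k"
proof (cases "k \<le> A + M")
  case True
  define T where "T = A + M - k"
  define Y where "Y l = froot M (sshift A f l) * froot l (sshift M g (k - l))" for l
  define S where "S = {l. l \<le> k \<and> l \<le> A \<and> k - l \<le> M}"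
  have Y: "Y (A - i) = froot (A + M) (coeff f i * coeff g (T - i) ^ (q ^ i))"
    if "i \<le> T" "i \<le> A" "T - i \<le> M" for i
  proof -
    have "A + M = (M + (A - i)) + i" "M - (k - (A - i)) = T - i"
      using that True unfolding T_def by auto
    hence "froot (A + M) (coeff g (T - i) ^ (q ^ i))
        = froot (M + (A - i)) (coeff g (M - (k - (A - i))))"
      by (simp only: froot_add_power)
    thus ?thesis
      using that True unfolding Y_def T_def
      by (simp add: sigma_shift_apply froot_mult froot_add_iter[symmetric] add.commute)
  qed
  have "sshift (A + M) (f \<star> g) k
      = (\<Sum>i | i \<le> T \<and> i \<le> A \<and> T - i \<le> M. froot (A + M) (coeff f i * coeff g (T - i) ^ (q ^ i)))"
    using True by (simp add: sigma_shift_apply coeff_tau_mult_degree_le[OF assms] froot_sum T_def)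
  also have "\<dots> = (\<Sum>l\<in>S. Y l)"
    by (rule sum.reindex_bij_witness[of _ "\<lambda>l. A - l" "\<lambda>i. A - i"])
       (use True in \<open>auto simp: S_def T_def Y\<close>)
  also have "\<dots> = (\<Sum>l\<le>k. Y l)"
    by (rule sum.mono_neutral_left) (auto simp: S_def Y_def sigma_shift_apply)
  finally show ?thesis
    unfolding sig_mult_apply Y_def .
next
  case False
  have "froot M (sshift A f l) * froot l (sshift M g (k - l)) = 0" for l
    using False by (cases "l \<le> A") (auto simp: sigma_shift_apply)
  thus ?thesis
    using False by (simp only: sig_mult_apply sum.neutral_const) (simp add: sigma_shift_apply)
qed

definition sigma_unshift :: "nat \<Rightarrow> (nat \<Rightarrow> 'k) \<Rightarrow> 'k poly"
  where "sigma_unshift A w = (\<Sum>l\<le>A. monom (w (A - l) ^ (q ^ A)) l)"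

lemma degree_sigma_unshift: "degree (sigma_unshift A w) \<le> A"
  unfolding sigma_unshift_def
  by (rule degree_sum_le) (auto intro: order.trans[OF degree_monom_le])

lemma sigma_shift_sigma_unshift: "sshift A (sigma_unshift A w) n = (if n \<le> A then w n else 0)"
  by (simp add: sigma_shift_apply sigma_unshift_def coeff_sum coeff_monom)

definition vanishes_below :: "nat \<Rightarrow> ('n \<Rightarrow> nat \<Rightarrow> 'k) \<Rightarrow> bool"
  where "vanishes_below N x \<longleftrightarrow> (\<forall>j n. n < N \<longrightarrow> x j n = 0)"

lemma vanishes_below_sigma_shift:
  assumes "\<And>j. degree (m j) \<le> l"
  shows "vanishes_below (N - l) (\<lambda>j. sshift N (m j))"
  unfolding vanishes_below_def
proof (intro allI impI)
  fix j n assume "n < N - l"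
  hence "degree (m j) < N - n" using assms[of j] by linarith
  thus "sshift N (m j) n = 0" by (simp add: sigma_shift_apply coeff_eq_0)
qed

end

section \<open>Full rank modulo \<open>\<sigma>\<^sup>s\<close>\<close>

context perfect_finite_subfield
begin

definition row_comb :: "('n::finite \<Rightarrow> nat \<Rightarrow> 'k) \<Rightarrow> ('n \<Rightarrow> 'n \<Rightarrow> nat \<Rightarrow> 'k) \<Rightarrow> 'n \<Rightarrow> nat \<Rightarrow> 'k"
  where "row_comb w C j = (\<lambda>n. \<Sum>i\<in>UNIV. (w i \<odot> C i j) n)"

definition col_comb :: "('n::finite \<Rightarrow> 'n \<Rightarrow> nat \<Rightarrow> 'k) \<Rightarrow> ('n \<Rightarrow> nat \<Rightarrow> 'k) \<Rightarrow> 'n \<Rightarrow> nat \<Rightarrow> 'k"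
  where "col_comb C w i = (\<lambda>n. \<Sum>j\<in>UNIV. (C i j \<odot> w j) n)"

text \<open>\<open>row_space_covers N C\<close>: the left \<open>K[[\<sigma>]]\<close>-span of the rows of \<open>C\<close> contains
  \<open>\<sigma>\<^sup>N K[[\<sigma>]]\<^sup>d\<close>.\<close>
definition row_space_covers :: "nat \<Rightarrow> ('n::finite \<Rightarrow> 'n \<Rightarrow> nat \<Rightarrow> 'k) \<Rightarrow> bool"
  where "row_space_covers N C \<longleftrightarrow> (\<forall>x. vanishes_below N x \<longrightarrow> (\<exists>w. \<forall>j. row_comb w C j = x j))"

definition col_space_covers :: "nat \<Rightarrow> ('n::finite \<Rightarrow> 'n \<Rightarrow> nat \<Rightarrow> 'k) \<Rightarrow> bool"
  where "col_space_covers N C \<longleftrightarrow> (\<forall>x. vanishes_below N x \<longrightarrow> (\<exists>w. \<forall>i. col_comb C w i = x i))"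

lemma row_space_covers_row_swap:
  fixes C :: "'n::finite \<Rightarrow> 'n \<Rightarrow> nat \<Rightarrow> 'k"
  assumes "row_space_covers N (\<lambda>i j. C (swap_idx a b i) j)"
  shows "row_space_covers N C"
  unfolding row_space_covers_def
proof (intro allI impI)
  fix x :: "'n \<Rightarrow> nat \<Rightarrow> 'k" assume "vanishes_below N x"
  then obtain w where w: "\<And>j. row_comb w (\<lambda>i j. C (swap_idx a b i) j) j = x j"
    using assms unfolding row_space_covers_def by blast
  have "row_comb (\<lambda>i. w (swap_idx a b i)) C j = x j" for j
    unfolding w[of j, symmetric] row_comb_def
    by (rule ext, subst sum_swap_idx[symmetric, of _ a b]) simp
  thus "\<exists>w. \<forall>j. row_comb w C j = x j" by blast
qed

lemma row_space_covers_col_swap: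
  fixes C :: "'n::finite \<Rightarrow> 'n \<Rightarrow> nat \<Rightarrow> 'k"
  assumes "row_space_covers N (\<lambda>i j. C i (swap_idx a b j))"
  shows "row_space_covers N C"
  unfolding row_space_covers_def
proof (intro allI impI)
  fix x :: "'n \<Rightarrow> nat \<Rightarrow> 'k" assume "vanishes_below N x"
  hence "vanishes_below N (\<lambda>j. x (swap_idx a b j))"
    unfolding vanishes_below_def by auto
  then obtain w where w: "\<And>j. row_comb w (\<lambda>i j. C i (swap_idx a b j)) j = x (swap_idx a b j)"
    using assms unfolding row_space_covers_def by blast
  have "row_comb w C j = x j" for j
    using w[of "swap_idx a b j"] unfolding row_comb_def by simp
  thus "\<exists>w. \<forall>j. row_comb w C j = x j" by blast
qed

lemma row_space_covers_row_scale:
  fixes C :: "'n::finite \<Rightarrow> 'n \<Rightarrow> nat \<Rightarrow> 'k"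
  assumes "row_space_covers N (\<lambda>i j. if i = a then u \<odot> C i j else C i j)"
  shows "row_space_covers N C"
  unfolding row_space_covers_def
proof (intro allI impI)
  fix x :: "'n \<Rightarrow> nat \<Rightarrow> 'k" assume "vanishes_below N x"
  then obtain w where w: "\<And>j. row_comb w (\<lambda>i j. if i = a then u \<odot> C i j else C i j) j = x j"
    using assms unfolding row_space_covers_def by blast
  have "row_comb (\<lambda>i. if i = a then w a \<odot> u else w i) C j = x j" for j
    unfolding w[of j, symmetric] row_comb_def
    by (rule ext, rule sum.cong) (auto simp: sig_mult_assoc)
  thus "\<exists>w. \<forall>j. row_comb w C j = x j" by blast
qed

lemma row_space_covers_col_scale:
  fixes C :: "'n::finite \<Rightarrow> 'n \<Rightarrow> nat \<Rightarrow> 'k"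
  assumes "row_space_covers N (\<lambda>i j. if j = a then C i j \<odot> u else C i j)" and "sig_unit q u"
  shows "row_space_covers N C"
  unfolding row_space_covers_def
proof (intro allI impI)
  fix x :: "'n \<Rightarrow> nat \<Rightarrow> 'k" assume x: "vanishes_below N x"
  obtain v where uv: "u \<odot> v = sig_one"
    using assms(2) unfolding sig_unit_def by blast
  define x' where "x' j = (if j = a then x a \<odot> u else x j)" for j
  have "vanishes_below N x'"
    using x unfolding vanishes_below_def x'_def by (auto intro: sig_mult_vanishes_left)
  then obtain w where w: "\<And>j. row_comb w (\<lambda>i j. if j = a then C i j \<odot> u else C i j) j = x' j"
    using assms(1) unfolding row_space_covers_def by blast
  have "row_comb w C j = x j" for j
  proof (cases "j = a")
    case True
    have "row_comb w C a \<odot> u = row_comb w (\<lambda>i j. if j = a then C i j \<odot> u else C i j) a"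
      unfolding row_comb_def by (rule ext) (simp add: sig_mult_sum_left sig_mult_assoc)
    also have "\<dots> = x a \<odot> u" using w[of a] by (simp add: x'_def)
    finally have "row_comb w C a \<odot> u \<odot> v = x a \<odot> u \<odot> v" by simp
    thus ?thesis using True uv by (simp add: sig_mult_assoc)
  qed (use w[of j] in \<open>simp add: row_comb_def x'_def\<close>)
  thus "\<exists>w. \<forall>j. row_comb w C j = x j" by blast
qed

lemma row_space_covers_row_add:
  fixes C :: "'n::finite \<Rightarrow> 'n \<Rightarrow> nat \<Rightarrow> 'k"
  assumes "row_space_covers N (\<lambda>i j. if i = a then (\<lambda>n. C a j n + (c \<odot> C b j) n) else C i j)"
  shows "row_space_covers N C"
  unfolding row_space_covers_def
proof (intro allI impI)
  fix x :: "'n \<Rightarrow> nat \<Rightarrow> 'k" assume "vanishes_below N x"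
  then obtain w
    where w: "\<And>j. row_comb w (\<lambda>i j. if i = a then (\<lambda>n. C a j n + (c \<odot> C b j) n) else C i j) j = x j"
    using assms unfolding row_space_covers_def by blast
  define w' where "w' i = (if i = b then (\<lambda>n. w b n + (w a \<odot> c) n) else w i)" for i
  have "row_comb w' C j n = (\<Sum>i\<in>UNIV. (w i \<odot> C i j) n + (if i = b then (w a \<odot> c \<odot> C b j) n else 0))"
    for j n
    unfolding row_comb_def w'_def by (rule sum.cong) (auto simp: sig_mult_add_left)
  also have "\<dots> j n = (\<Sum>i\<in>UNIV. (w i \<odot> C i j) n + (if i = a then (w a \<odot> c \<odot> C b j) n else 0))"
    for j n
    by (simp add: sum.distrib)
  also have "\<dots> j n = row_comb w (\<lambda>i j. if i = a then (\<lambda>n. C a j n + (c \<odot> C b j) n) else C i j) j n"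
    for j n
    unfolding row_comb_def by (rule sum.cong) (auto simp: sig_mult_add_right sig_mult_assoc)
  finally have "row_comb w' C j = x j" for j
    using w by auto
  thus "\<exists>w. \<forall>j. row_comb w C j = x j" by blast
qed

lemma row_space_covers_col_add:
  fixes C :: "'n::finite \<Rightarrow> 'n \<Rightarrow> nat \<Rightarrow> 'k"
  assumes "row_space_covers N (\<lambda>i j. if j = a then (\<lambda>n. C i a n + (C i b \<odot> c) n) else C i j)"
    and "a \<noteq> b"
  shows "row_space_covers N C"
  unfolding row_space_covers_def
proof (intro allI impI)
  fix x :: "'n \<Rightarrow> nat \<Rightarrow> 'k" assume x: "vanishes_below N x"
  define x' where "x' j = (if j = a then (\<lambda>n. x a n + (x b \<odot> c) n) else x j)" for j
  have "vanishes_below N x'"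
    using x unfolding vanishes_below_def x'_def by (auto intro: sig_mult_vanishes_left)
  then obtain w
    where w: "\<And>j. row_comb w (\<lambda>i j. if j = a then (\<lambda>n. C i a n + (C i b \<odot> c) n) else C i j) j = x' j"
    using assms(1) unfolding row_space_covers_def by blast
  have wb: "row_comb w C b = x b"
    using w[of b] assms(2) unfolding row_comb_def x'_def by simp
  have "row_comb w C j = x j" for j
  proof (cases "j = a")
    case True
    have "(\<Sum>i\<in>UNIV. (w i \<odot> (C i b \<odot> c)) n) = (row_comb w C b \<odot> c) n" for n
      unfolding row_comb_def by (simp add: sig_mult_sum_left sig_mult_assoc)
    hence "row_comb w C a n + (x b \<odot> c) n = x a n + (x b \<odot> c) n" for n
      using fun_cong[OF w[of a], of n] wb
      by (simp add: x'_def row_comb_def sig_mult_add_right sum.distrib)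
    thus ?thesis using True by auto
  qed (use w[of j] in \<open>simp add: row_comb_def x'_def\<close>)
  thus "\<exists>w. \<forall>j. row_comb w C j = x j" by blast
qed

lemma row_space_covers_elem_ops:
  "elem_ops q B C \<Longrightarrow> row_space_covers N C \<Longrightarrow> row_space_covers N B"
proof (induction rule: elem_ops.induct)
  case (row_swap B C a b)
  thus ?case using row_space_covers_row_swap by blast
next
  case (col_swap B C a b)
  thus ?case using row_space_covers_col_swap by blast
next
  case (row_scale B C u a)
  thus ?case using row_space_covers_row_scale by blast
next
  case (col_scale B C u a)
  thus ?case using row_space_covers_col_scale by blast
next
  case (row_add B C a b c)
  thus ?case using row_space_covers_row_add by blast
next
  case (col_add B C a b c)
  thus ?case using row_space_covers_col_add by blast
qed

lemma row_space_covers_diag: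
  fixes B :: "'n::finite \<Rightarrow> 'n \<Rightarrow> nat \<Rightarrow> 'k"
  assumes "\<And>i j. i \<noteq> j \<Longrightarrow> B i j = (\<lambda>_. 0)" and "\<And>i. \<exists>\<nu>\<le>N. B i i = sig_pow \<nu>"
  shows "row_space_covers N B"
  unfolding row_space_covers_def
proof (intro allI impI)
  fix x :: "'n \<Rightarrow> nat \<Rightarrow> 'k" assume x: "vanishes_below N x"
  obtain \<nu> where \<nu>: "\<And>i. \<nu> i \<le> N \<and> B i i = sig_pow (\<nu> i)"
    using assms(2) by metis
  have "row_comb (\<lambda>i n. x i (n + \<nu> i)) B j = x j" for j
  proof (rule ext)
    fix n
    have "row_comb (\<lambda>i n. x i (n + \<nu> i)) B j n = ((\<lambda>n. x j (n + \<nu> j)) \<odot> B j j) n"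
      unfolding row_comb_def by (subst sum.remove[of _ j]) (simp_all add: assms(1))
    also have "\<dots> = x j n"
      using \<nu>[of j] x unfolding vanishes_below_def by (auto simp: sig_mult_sig_pow_right)
    finally show "row_comb (\<lambda>i n. x i (n + \<nu> i)) B j n = x j n" .
  qed
  thus "\<exists>w. \<forall>j. row_comb w B j = x j" by blast
qed

lemma col_space_covers_row_swap:
  fixes C :: "'n::finite \<Rightarrow> 'n \<Rightarrow> nat \<Rightarrow> 'k"
  assumes "col_space_covers N (\<lambda>i j. C (swap_idx a b i) j)"
  shows "col_space_covers N C"
  unfolding col_space_covers_def
proof (intro allI impI)
  fix x :: "'n \<Rightarrow> nat \<Rightarrow> 'k" assume "vanishes_below N x"
  hence "vanishes_below N (\<lambda>i. x (swap_idx a b i))"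
    unfolding vanishes_below_def by auto
  then obtain w where w: "\<And>i. col_comb (\<lambda>i j. C (swap_idx a b i) j) w i = x (swap_idx a b i)"
    using assms unfolding col_space_covers_def by blast
  have "col_comb C w i = x i" for i
    using w[of "swap_idx a b i"] unfolding col_comb_def by simp
  thus "\<exists>w. \<forall>i. col_comb C w i = x i" by blast
qed

lemma col_space_covers_col_swap:
  fixes C :: "'n::finite \<Rightarrow> 'n \<Rightarrow> nat \<Rightarrow> 'k"
  assumes "col_space_covers N (\<lambda>i j. C i (swap_idx a b j))"
  shows "col_space_covers N C"
  unfolding col_space_covers_def
proof (intro allI impI)
  fix x :: "'n \<Rightarrow> nat \<Rightarrow> 'k" assume "vanishes_below N x"
  then obtain w where w: "\<And>i. col_comb (\<lambda>i j. C i (swap_idx a b j)) w i = x i"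
    using assms unfolding col_space_covers_def by blast
  have "col_comb C (\<lambda>j. w (swap_idx a b j)) i = x i" for i
    unfolding w[of i, symmetric] col_comb_def
    by (rule ext, subst sum_swap_idx[symmetric, of _ a b]) simp
  thus "\<exists>w. \<forall>i. col_comb C w i = x i" by blast
qed

lemma col_space_covers_row_scale:
  fixes C :: "'n::finite \<Rightarrow> 'n \<Rightarrow> nat \<Rightarrow> 'k"
  assumes "col_space_covers N (\<lambda>i j. if i = a then u \<odot> C i j else C i j)" and "sig_unit q u"
  shows "col_space_covers N C"
  unfolding col_space_covers_def
proof (intro allI impI)
  fix x :: "'n \<Rightarrow> nat \<Rightarrow> 'k" assume x: "vanishes_below N x"
  obtain v where vu: "v \<odot> u = sig_one"
    using assms(2) unfolding sig_unit_def by blast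
  define x' where "x' i = (if i = a then u \<odot> x a else x i)" for i
  have "vanishes_below N x'"
    using x unfolding vanishes_below_def x'_def by (auto intro: sig_mult_vanishes_right)
  then obtain w where w: "\<And>i. col_comb (\<lambda>i j. if i = a then u \<odot> C i j else C i j) w i = x' i"
    using assms(1) unfolding col_space_covers_def by blast
  have "col_comb C w i = x i" for i
  proof (cases "i = a")
    case True
    have "u \<odot> col_comb C w a = col_comb (\<lambda>i j. if i = a then u \<odot> C i j else C i j) w a"
      unfolding col_comb_def by (rule ext) (simp add: sig_mult_sum_right sig_mult_assoc)
    also have "\<dots> = u \<odot> x a" using w[of a] by (simp add: x'_def)
    finally have "v \<odot> (u \<odot> col_comb C w a) = v \<odot> (u \<odot> x a)" by simp
    thus ?thesis using True vu by (simp flip: sig_mult_assoc)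
  qed (use w[of i] in \<open>simp add: col_comb_def x'_def\<close>)
  thus "\<exists>w. \<forall>i. col_comb C w i = x i" by blast
qed

lemma col_space_covers_col_scale:
  fixes C :: "'n::finite \<Rightarrow> 'n \<Rightarrow> nat \<Rightarrow> 'k"
  assumes "col_space_covers N (\<lambda>i j. if j = a then C i j \<odot> u else C i j)"
  shows "col_space_covers N C"
  unfolding col_space_covers_def
proof (intro allI impI)
  fix x :: "'n \<Rightarrow> nat \<Rightarrow> 'k" assume "vanishes_below N x"
  then obtain w where w: "\<And>i. col_comb (\<lambda>i j. if j = a then C i j \<odot> u else C i j) w i = x i"
    using assms unfolding col_space_covers_def by blast
  have "col_comb C (\<lambda>j. if j = a then u \<odot> w a else w j) i = x i" for i
    unfolding w[of i, symmetric] col_comb_def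
    by (rule ext, rule sum.cong) (auto simp: sig_mult_assoc)
  thus "\<exists>w. \<forall>i. col_comb C w i = x i" by blast
qed

lemma col_space_covers_row_add:
  fixes C :: "'n::finite \<Rightarrow> 'n \<Rightarrow> nat \<Rightarrow> 'k"
  assumes "col_space_covers N (\<lambda>i j. if i = a then (\<lambda>n. C a j n + (c \<odot> C b j) n) else C i j)"
    and "a \<noteq> b"
  shows "col_space_covers N C"
  unfolding col_space_covers_def
proof (intro allI impI)
  fix x :: "'n \<Rightarrow> nat \<Rightarrow> 'k" assume x: "vanishes_below N x"
  define x' where "x' i = (if i = a then (\<lambda>n. x a n + (c \<odot> x b) n) else x i)" for i
  have "vanishes_below N x'"
    using x unfolding vanishes_below_def x'_def by (auto intro: sig_mult_vanishes_right)
  then obtain w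
    where w: "\<And>i. col_comb (\<lambda>i j. if i = a then (\<lambda>n. C a j n + (c \<odot> C b j) n) else C i j) w i = x' i"
    using assms(1) unfolding col_space_covers_def by blast
  have wb: "col_comb C w b = x b"
    using w[of b] assms(2) unfolding col_comb_def x'_def by simp
  have "col_comb C w i = x i" for i
  proof (cases "i = a")
    case True
    have "(\<Sum>j\<in>UNIV. (c \<odot> C b j \<odot> w j) n) = (c \<odot> col_comb C w b) n" for n
      unfolding col_comb_def by (simp add: sig_mult_sum_right sig_mult_assoc)
    hence "col_comb C w a n + (c \<odot> x b) n = x a n + (c \<odot> x b) n" for n
      using fun_cong[OF w[of a], of n] wb
      by (simp add: x'_def col_comb_def sig_mult_add_left sum.distrib)
    thus ?thesis using True by auto
  qed (use w[of i] in \<open>simp add: col_comb_def x'_def\<close>)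
  thus "\<exists>w. \<forall>i. col_comb C w i = x i" by blast
qed

lemma col_space_covers_col_add:
  fixes C :: "'n::finite \<Rightarrow> 'n \<Rightarrow> nat \<Rightarrow> 'k"
  assumes "col_space_covers N (\<lambda>i j. if j = a then (\<lambda>n. C i a n + (C i b \<odot> c) n) else C i j)"
  shows "col_space_covers N C"
  unfolding col_space_covers_def
proof (intro allI impI)
  fix x :: "'n \<Rightarrow> nat \<Rightarrow> 'k" assume "vanishes_below N x"
  then obtain w
    where w: "\<And>i. col_comb (\<lambda>i j. if j = a then (\<lambda>n. C i a n + (C i b \<odot> c) n) else C i j) w i = x i"
    using assms unfolding col_space_covers_def by blast
  define w' where "w' j = (if j = b then (\<lambda>n. w b n + (c \<odot> w a) n) else w j)" for j
  have "col_comb C w' i n = (\<Sum>j\<in>UNIV. (C i j \<odot> w j) n + (if j = b then (C i b \<odot> (c \<odot> w a)) n else 0))"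
    for i n
    unfolding col_comb_def w'_def by (rule sum.cong) (auto simp: sig_mult_add_right)
  also have "\<dots> i n = (\<Sum>j\<in>UNIV. (C i j \<odot> w j) n + (if j = a then (C i b \<odot> (c \<odot> w a)) n else 0))"
    for i n
    by (simp add: sum.distrib)
  also have "\<dots> i n = col_comb (\<lambda>i j. if j = a then (\<lambda>n. C i a n + (C i b \<odot> c) n) else C i j) w i n"
    for i n
    unfolding col_comb_def by (rule sum.cong) (auto simp: sig_mult_add_left sig_mult_assoc)
  finally have "col_comb C w' i = x i" for i
    using w by auto
  thus "\<exists>w. \<forall>i. col_comb C w i = x i" by blast
qed

lemma col_space_covers_elem_ops:
  "elem_ops q B C \<Longrightarrow> col_space_covers N C \<Longrightarrow> col_space_covers N B"
proof (induction rule: elem_ops.induct)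
  case (row_swap B C a b)
  thus ?case using col_space_covers_row_swap by blast
next
  case (col_swap B C a b)
  thus ?case using col_space_covers_col_swap by blast
next
  case (row_scale B C u a)
  thus ?case using col_space_covers_row_scale by blast
next
  case (col_scale B C u a)
  thus ?case using col_space_covers_col_scale by blast
next
  case (row_add B C a b c)
  thus ?case using col_space_covers_row_add by blast
next
  case (col_add B C a b c)
  thus ?case using col_space_covers_col_add by blast
qed

lemma col_space_covers_diag:
  fixes B :: "'n::finite \<Rightarrow> 'n \<Rightarrow> nat \<Rightarrow> 'k"
  assumes "\<And>i j. i \<noteq> j \<Longrightarrow> B i j = (\<lambda>_. 0)" and "\<And>i. \<exists>\<nu>\<le>N. B i i = sig_pow \<nu>"
  shows "col_space_covers N B"
  unfolding col_space_covers_def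
proof (intro allI impI)
  fix x :: "'n \<Rightarrow> nat \<Rightarrow> 'k" assume x: "vanishes_below N x"
  obtain \<nu> where \<nu>: "\<And>i. \<nu> i \<le> N \<and> B i i = sig_pow (\<nu> i)"
    using assms(2) by metis
  define w where "w i n = x i (n + \<nu> i) ^ (q ^ \<nu> i)" for i n
  have "col_comb B w i = x i" for i
  proof (rule ext)
    fix n
    have "col_comb B w i n = (B i i \<odot> w i) n"
      unfolding col_comb_def by (subst sum.remove[of _ i]) (simp_all add: assms(1))
    also have "\<dots> = x i n"
      using \<nu>[of i] x unfolding vanishes_below_def by (auto simp: sig_mult_sig_pow_left w_def)
    finally show "col_comb B w i n = x i n" .
  qed
  thus "\<exists>w. \<forall>i. col_comb B w i = x i" by blast
qed

lemma col_space_covers_froot: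
  fixes C :: "'n::finite \<Rightarrow> 'n \<Rightarrow> nat \<Rightarrow> 'k"
  assumes "col_space_covers N C"
  shows "col_space_covers N (\<lambda>i j n. froot M (C i j n))"
  unfolding col_space_covers_def
proof (intro allI impI)
  fix x :: "'n \<Rightarrow> nat \<Rightarrow> 'k" assume "vanishes_below N x"
  hence "vanishes_below N (\<lambda>i n. x i n ^ (q ^ M))"
    unfolding vanishes_below_def by simp
  then obtain w where w: "\<And>i. col_comb C w i = (\<lambda>n. x i n ^ (q ^ M))"
    using assms unfolding col_space_covers_def by blast
  have "col_comb (\<lambda>i j n. froot M (C i j n)) (\<lambda>j n. froot M (w j n)) i = x i" for i
  proof (rule ext)
    fix n
    have "col_comb (\<lambda>i j n. froot M (C i j n)) (\<lambda>j n. froot M (w j n)) i n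
        = froot M (col_comb C w i n)"
      unfolding col_comb_def by (simp add: sig_mult_froot froot_sum)
    thus "col_comb (\<lambda>i j n. froot M (C i j n)) (\<lambda>j n. froot M (w j n)) i n = x i n"
      using w by simp
  qed
  thus "\<exists>w. \<forall>i. col_comb (\<lambda>i j n. froot M (C i j n)) w i = x i" by blast
qed

lemma full_rank_modE:
  fixes B :: "'n::finite \<Rightarrow> 'n \<Rightarrow> nat \<Rightarrow> 'k"
  assumes "rank_mod q B s (card (UNIV :: 'n set))"
  obtains B' where "elem_ops q B B'" "\<And>i j. i \<noteq> j \<Longrightarrow> B' i j = (\<lambda>_. 0)"
    "\<And>i. \<exists>\<nu>\<le>s - 1. B' i i = sig_pow \<nu>" "0 < s"
proof -
  obtain B' where B': "elem_ops q B B'" "\<forall>i j. i \<noteq> j \<longrightarrow> B' i j = (\<lambda>_. 0)"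
    and "card {i. \<exists>\<nu><s. B' i i = sig_pow \<nu>} = card (UNIV :: 'n set)"
    using assms unfolding rank_mod_def by blast
  hence "{i. \<exists>\<nu><s. B' i i = sig_pow \<nu>} = UNIV"
    by (intro card_subset_eq) auto
  hence diag: "\<exists>\<nu><s. B' i i = sig_pow \<nu>" for i
    by blast
  have "\<exists>\<nu>\<le>s - 1. B' i i = sig_pow \<nu>" for i
  proof -
    obtain \<nu> where "\<nu> < s" "B' i i = sig_pow \<nu>" using diag by blast
    thus ?thesis by (intro exI[of _ \<nu>]) simp
  qed
  moreover have "0 < s"
    using diag[of undefined] by auto
  ultimately show thesis using B' that by blast
qed

lemma covers_if_full_rank_mod:
  fixes B :: "'n::finite \<Rightarrow> 'n \<Rightarrow> nat \<Rightarrow> 'k"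
  assumes "rank_mod q B s (card (UNIV :: 'n set))"
  shows "row_space_covers (s - 1) B" and "col_space_covers (s - 1) B"
  using full_rank_modE[OF assms]
  by (metis row_space_covers_elem_ops row_space_covers_diag,
      metis col_space_covers_elem_ops col_space_covers_diag)

lemma row_comb_diff: "row_comb (\<lambda>i n. w i n - w' i n) C j n = row_comb w C j n - row_comb w' C j n"
  unfolding row_comb_def by (simp add: sig_mult_diff_left sum_subtractf)

lemma col_comb_diff: "col_comb C (\<lambda>j n. w j n - w' j n) i n = col_comb C w i n - col_comb C w' i n"
  unfolding col_comb_def by (simp add: sig_mult_diff_right sum_subtractf)

lemma row_comb_vanishes: "(\<And>i n. n < N \<Longrightarrow> w i n = 0) \<Longrightarrow> n < N \<Longrightarrow> row_comb w C j n = 0"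
  unfolding row_comb_def by (intro sum.neutral ballI sig_mult_vanishes_left[of N]) auto

lemma col_comb_vanishes: "(\<And>j n. n < N \<Longrightarrow> w j n = 0) \<Longrightarrow> n < N \<Longrightarrow> col_comb C w i n = 0"
  unfolding col_comb_def by (intro sum.neutral ballI sig_mult_vanishes_right[of N]) auto

lemma sigma_shift_row_mult:
  assumes "\<And>i. degree (X i) \<le> A" "\<And>i. degree (D i j) \<le> M"
  shows "sshift (A + M) (row_mult X D j) n
    = row_comb (\<lambda>i n. froot M (sshift A (X i) n)) (\<lambda>i j. sshift M (D i j)) j n"
  unfolding row_mult_def row_comb_def sigma_shift_sum by (simp add: sigma_shift_tau_mult assms)

lemma sigma_shift_col_mult:
  assumes "\<And>j. degree (D i j) \<le> A" "\<And>j. degree (v j) \<le> M"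
  shows "sshift (A + M) (col_mult D v i) n
    = col_comb (\<lambda>i j n. froot M (sshift A (D i j) n)) (\<lambda>j. sshift M (v j)) i n"
  unfolding col_mult_def col_comb_def sigma_shift_sum by (simp add: sigma_shift_tau_mult assms)

end

section \<open>Division with remainder and finite generation\<close>

context perfect_finite_subfield
begin

text \<open>Division with remainder on the right by \<open>Da\<close>: the quotient is read off from a solution
  of \<open>w \<sigma>\<^sup>s Da = \<sigma>\<^sup>N m\<close> in \<open>K[[\<sigma>]]\<close>, truncated to a polynomial.\<close>
lemma row_division:
  fixes Da :: "'n::finite \<Rightarrow> 'n \<Rightarrow> 'k poly"
  assumes cov: "row_space_covers (s - 1) (\<lambda>i j. sshift s (Da i j))"
    and deg_Da: "\<And>i j. degree (Da i j) \<le> s" and "0 < s" "s \<le> l"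
    and deg_m: "\<And>j. degree (m j) \<le> l"
  shows "\<exists>Q. (\<forall>i. degree (Q i) < l) \<and> (\<forall>j. degree (m j - row_mult Q Da j) < s)"
proof -
  define A where "A = l - 1"
  define B where "B = (\<lambda>i j. sshift s (Da i j))"
  have "vanishes_below (s - 1) (\<lambda>j. sshift (A + s) (m j))"
    using vanishes_below_sigma_shift[of m l "A + s", OF deg_m] \<open>0 < s\<close> \<open>s \<le> l\<close>
    by (simp add: A_def)
  then obtain w where w: "\<And>j. row_comb w B j = sshift (A + s) (m j)"
    using cov unfolding row_space_covers_def B_def by blast
  define Q where "Q i = sigma_unshift A (\<lambda>n. w i n ^ (q ^ s))" for i
  have deg_Q: "degree (Q i) \<le> A" for i
    unfolding Q_def by (rule degree_sigma_unshift)
  have "froot s (sshift A (Q i) n) = (if n \<le> A then w i n else 0)" for i n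
    by (simp add: Q_def sigma_shift_sigma_unshift)
  hence shift_QDa:
    "sshift (A + s) (row_mult Q Da j) n = row_comb (\<lambda>i n. if n \<le> A then w i n else 0) B j n"
    for j n
    using sigma_shift_row_mult[of Q A Da j s n] deg_Q deg_Da by (simp add: B_def)
  have "degree (m j - row_mult Q Da j) \<le> A + s - l" for j
  proof (rule degree_le_if_sigma_shift_vanishes)
    show "degree (m j - row_mult Q Da j) \<le> A + s"
      using deg_m[of j] \<open>0 < s\<close> \<open>s \<le> l\<close> degree_row_mult_le[of Q A Da j s] deg_Q deg_Da
      by (intro degree_diff_le) (simp_all add: A_def)
    show "sshift (A + s) (m j - row_mult Q Da j) n = 0" if "n < l" for n
      using that
      by (simp add: sigma_shift_diff shift_QDa flip: w row_comb_diff)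
         (rule row_comb_vanishes[of l], auto simp: A_def)
  qed
  moreover have "A + s - l < s" "A < l"
    using \<open>0 < s\<close> \<open>s \<le> l\<close> by (simp_all add: A_def)
  ultimately show ?thesis
    using deg_Q by (meson le_less_trans)
qed

lemma col_division:
  fixes Da :: "'n::finite \<Rightarrow> 'n \<Rightarrow> 'k poly"
  assumes cov: "col_space_covers (s - 1) (\<lambda>i j. sshift s (Da i j))"
    and deg_Da: "\<And>i j. degree (Da i j) \<le> s" and "0 < s" "s \<le> l"
    and deg_v: "\<And>i. degree (v i) \<le> l"
  shows "\<exists>Q. (\<forall>j. degree (Q j) < l) \<and> (\<forall>i. degree (v i - col_mult Da Q i) < s)"
proof -
  define A where "A = l - 1"
  define B where "B = (\<lambda>i j n. froot A (sshift s (Da i j) n))"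
  have "vanishes_below (s - 1) (\<lambda>i. sshift (s + A) (v i))"
    using vanishes_below_sigma_shift[of v l "s + A", OF deg_v] \<open>0 < s\<close> \<open>s \<le> l\<close>
    by (simp add: A_def)
  then obtain w where w: "\<And>i. col_comb B w i = sshift (s + A) (v i)"
    using col_space_covers_froot[OF cov] unfolding col_space_covers_def B_def by blast
  define Q where "Q j = sigma_unshift A (w j)" for j
  have deg_Q: "degree (Q j) \<le> A" for j
    unfolding Q_def by (rule degree_sigma_unshift)
  have "sshift A (Q j) = (\<lambda>n. if n \<le> A then w j n else 0)" for j
    by (rule ext) (simp add: Q_def sigma_shift_sigma_unshift)
  hence shift_DaQ:
    "sshift (s + A) (col_mult Da Q i) n = col_comb B (\<lambda>j n. if n \<le> A then w j n else 0) i n"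
    for i n
    using sigma_shift_col_mult[of Da i s Q A n] deg_Q deg_Da by (simp add: B_def)
  have "degree (v i - col_mult Da Q i) \<le> s + A - l" for i
  proof (rule degree_le_if_sigma_shift_vanishes)
    show "degree (v i - col_mult Da Q i) \<le> s + A"
      using deg_v[of i] \<open>0 < s\<close> \<open>s \<le> l\<close> degree_col_mult_le[of Da i s Q A] deg_Q deg_Da
      by (intro degree_diff_le) (simp_all add: A_def)
    show "sshift (s + A) (v i - col_mult Da Q i) n = 0" if "n < l" for n
      using that
      by (simp add: sigma_shift_diff shift_DaQ flip: w col_comb_diff)
         (rule col_comb_vanishes[of l], auto simp: A_def)
  qed
  moreover have "s + A - l < s" "A < l"
    using \<open>0 < s\<close> \<open>s \<le> l\<close> by (simp_all add: A_def)
  ultimately show ?thesis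
    using deg_Q by (meson le_less_trans)
qed

lemma abelian_if_row_space_covers:
  assumes "set (coeffs a) \<subseteq> F" "0 < s" "\<And>i j. degree (phi_eval q D a i j) \<le> s"
    and "row_space_covers (s - 1) (\<lambda>i j. sshift s (phi_eval q D a i j))"
  shows "abelian q D"
proof -
  interpret poly_vec_action "row_action D"
    by (rule poly_vec_action_row_act)
  have "\<exists>S. finite S \<and> (\<forall>m. in_span S m)"
  proof (rule finitely_generated_if_degree_reducible)
    show "\<exists>c'. row_action D [:c':] (monom_vec j 1 l) = monom_vec j c l" for j c l
      by (rule exI[of _ c], rule ext) (simp add: row_act_eq_sum[of _ 0] monom_vec_def smult_monom)
    show "\<exists>Q. (\<forall>i. degree (Q i) < l) \<and> (\<forall>j. degree (m j - row_action D a Q j) < s)"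
      if "s \<le> l" "\<And>j. degree (m j) \<le> l" for m l
      using row_division[OF assms(4,3,2) that] by (simp add: row_mult_phi_eval[OF assms(1)])
  qed
  thus ?thesis unfolding abelian_def in_span_def .
qed

lemma t_finite_if_col_space_covers:
  assumes "set (coeffs a) \<subseteq> F" "0 < s" "\<And>i j. degree (phi_eval q D a i j) \<le> s"
    and "col_space_covers (s - 1) (\<lambda>i j. sshift s (phi_eval q D a i j))"
  shows "t_finite q D"
proof -
  interpret poly_vec_action "col_action D"
    by (rule poly_vec_action_col_act)
  have "\<exists>S. finite S \<and> (\<forall>m. in_span S m)"
  proof (rule finitely_generated_if_degree_reducible)
    show "\<exists>c'. col_action D [:c':] (monom_vec j 1 l) = monom_vec j c l" for j c l
      by (rule exI[of _ "froot l c"], rule ext)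
         (simp add: col_act_eq_sum[of _ 0] monom_vec_def monom_tau_mult_const)
    show "\<exists>Q. (\<forall>i. degree (Q i) < l) \<and> (\<forall>j. degree (m j - col_action D a Q j) < s)"
      if "s \<le> l" "\<And>j. degree (m j) \<le> l" for m l
      using col_division[OF assms(4,3,2) that] by (simp add: col_mult_phi_eval[OF assms(1)])
  qed
  thus ?thesis unfolding t_finite_def in_span_def .
qed

end

theorem proposition6p1:
  fixes F :: "'k::field set" and \<theta> :: 'k and D :: "'n::finite \<Rightarrow> 'n \<Rightarrow> 'k poly"
  assumes "subfield_set F" and "finite F"
    and "perfect_field TYPE('k)"
    and "is_t_module F \<theta> D"
    and "\<exists>a. set (coeffs a) \<subseteq> F \<and> degree a \<ge> 1 \<and>
           (let q = card F; Da = phi_eval q D a; s = tau_deg Da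
            in rank_mod q (\<lambda>i j. sigma_shift q s (Da i j)) s (card (UNIV :: 'n set)))"
  shows "abelian (card F) D \<and> t_finite (card F) D"
proof -
  interpret perfect_finite_subfield F
    using assms(1-3) by unfold_locales
  obtain a where a: "set (coeffs a) \<subseteq> F"
    and rk: "rank_mod q (\<lambda>i j. sshift (tau_deg (phi_eval q D a)) (phi_eval q D a i j))
               (tau_deg (phi_eval q D a)) (card (UNIV :: 'n set))"
    using assms(5) unfolding Let_def by blast
  define s where "s = tau_deg (phi_eval q D a)"
  have deg: "degree (phi_eval q D a i j) \<le> s" for i j
    unfolding s_def by (rule degree_le_tau_deg)
  have "0 < s"
    using full_rank_modE[OF rk] s_def by blast
  show ?thesis
    using abelian_if_row_space_covers[OF a \<open>0 < s\<close> deg]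
      t_finite_if_col_space_covers[OF a \<open>0 < s\<close> deg] covers_if_full_rank_mod[OF rk] s_def
    by blast
qed

end
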